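(* For any Kelvin-Planck theory $(\Sigma,\mathscr{P})$, the set of Clausius-Duhem temperature scales is dense, in the sup-norm topology of $C(\Sigma,\mathbb{R})$, in the set of strong Clausius temperature scales.
   Context: $\Sigma$ is a compact Hausdorff space. $\mathscr{M}(\Sigma)$ is the vector space of regular signed Borel measures on $\Sigma$ with its weak-star topology; $\mathscr{M}_+(\Sigma)$ the nonnegative members; $\mathscr{M}^\circ(\Sigma)=\{\mu:\mu(\Sigma)=0\}$; $\mathscr{V}(\Sigma)=\mathscr{M}^\circ(\Sigma)\oplus\mathscr{M}(\Sigma)$ with the product topology. For $\mathscr{P}\subset\mathscr{V}(\Sigma)$, $\hat{\mathscr{P}}$ is the closure of the set of nonnegative multiples of members of $\mathscr{P}$. A thermodynamical theory is $(\Sigma,\mathscr{P})$ with $\hat{\mathscr{P}}$ convex; it is Kelvin-Planck if $\hat{\mathscr{P}}\cap\{(0,\nu):\nu\in\mathscr{M}_+(\Sigma)\}=\{(0,0)\}$. A Clausius-Duhem temperature scale is $T\in C(\Sigma,(0,\infty))$ for which some $\eta\in C(\Sigma,\mathbb{R})$ satisfies $\int_\Sigma\eta\,d(\Delta\mathscr{m})\ge\int_\Sigma\frac{d\mathscr{q}}{T}$ for all $(\Delta\mathscr{m},\mathscr{q})\in\mathscr{P}$. A strong Clausius temperature scale is a continuous $T:\Sigma\to(0,\infty)$ with $0\ge\int_\Sigma\frac{d\mathscr{q}}{T}$ for every $\mathscr{q}\in\mathscr{M}(\Sigma)$ such that $(0,\mathscr{q})\in\hat{\mathscr{P}}$. 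*)

theory Defs
  imports "HOL-Probability.Probability"
begin

text \<open>A regular signed Borel measure on the compact Hausdorff space (the type 'a with
compact UNIV) is represented as a pair (M1, M2) of finite, regular, nonnegative Borel
measures, standing for the signed measure M1 - M2 (Jordan decomposition).  All notions
below depend only on the represented signed measure.\<close>

type_synonym 'a sm = "'a measure \<times> 'a measure"
type_synonym 'a vp = "'a sm \<times> 'a sm"

definition regular_fin_borel :: "('a::topological_space) measure \<Rightarrow> bool" where
  "regular_fin_borel M \<longleftrightarrow> sets M = sets borel \<and> finite_measure M \<and>
     (\<forall>A\<in>sets borel.
        emeasure M A = (SUP K\<in>{K. compact K \<and> K \<subseteq> A}. emeasure M K) \<and>
        emeasure M A = (INF U\<in>{U. open U \<and> A \<subseteq> U}. emeasure M U))"

definition rsm :: "('a::topological_space) sm \<Rightarrow> bool" where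
  "rsm \<mu> \<longleftrightarrow> regular_fin_borel (fst \<mu>) \<and> regular_fin_borel (snd \<mu>)"

definition sval :: "('a::topological_space) sm \<Rightarrow> 'a set \<Rightarrow> real" where
  "sval \<mu> A = measure (fst \<mu>) A - measure (snd \<mu>) A"

definition sint :: "('a::topological_space) sm \<Rightarrow> ('a \<Rightarrow> real) \<Rightarrow> real" where
  "sint \<mu> f = (integral\<^sup>L (fst \<mu>) f) - (integral\<^sup>L (snd \<mu>) f)"

definition inV :: "('a::topological_space) vp \<Rightarrow> bool" where
  "inV x \<longleftrightarrow> rsm (fst x) \<and> rsm (snd x) \<and> sval (fst x) UNIV = 0"

text \<open>x belongs to hat P: the closure, in the product weak-star topology of V(Sigma),
of the nonnegative multiples of members of P.  Basic weak-star neighbourhoods of x are given by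
finitely many continuous functions and a tolerance epsilon.\<close>
definition in_hat :: "('a::topological_space) vp set \<Rightarrow> 'a vp \<Rightarrow> bool" where
  "in_hat P x \<longleftrightarrow> inV x \<and>
     (\<forall>F \<epsilon>. finite F \<longrightarrow> (\<forall>f\<in>F. continuous_on UNIV f) \<longrightarrow> \<epsilon> > 0 \<longrightarrow>
        (\<exists>c::real. c \<ge> 0 \<and> (\<exists>p\<in>P. \<forall>f\<in>F.
            \<bar>c * sint (fst p) f - sint (fst x) f\<bar> < \<epsilon> \<and>
            \<bar>c * sint (snd p) f - sint (snd x) f\<bar> < \<epsilon>)))"

definition thermo_theory :: "('a::topological_space) vp set \<Rightarrow> bool" where
  "thermo_theory P \<longleftrightarrow> (\<forall>p\<in>P. inV p) \<and>
     (\<forall>x y z t. in_hat P x \<longrightarrow> in_hat P y \<longrightarrow> inV z \<longrightarrow> 0 \<le> t \<longrightarrow> t \<le> (1::real) \<longrightarrow>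
        (\<forall>A\<in>sets borel. sval (fst z) A = t * sval (fst x) A + (1 - t) * sval (fst y) A
                      \<and> sval (snd z) A = t * sval (snd x) A + (1 - t) * sval (snd y) A) \<longrightarrow>
        in_hat P z)"

definition kelvin_planck :: "('a::topological_space) vp set \<Rightarrow> bool" where
  "kelvin_planck P \<longleftrightarrow> thermo_theory P \<and>
     (\<exists>x. in_hat P x \<and> (\<forall>A\<in>sets borel. sval (fst x) A = 0 \<and> sval (snd x) A = 0)) \<and>
     (\<forall>x. in_hat P x \<longrightarrow> (\<forall>A\<in>sets borel. sval (fst x) A = 0) \<longrightarrow>
          (\<forall>A\<in>sets borel. sval (snd x) A \<ge> 0) \<longrightarrow>
          (\<forall>A\<in>sets borel. sval (snd x) A = 0))"

definition clausius_duhem :: "('a::topological_space) vp set \<Rightarrow> ('a \<Rightarrow> real) \<Rightarrow> bool" where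
  "clausius_duhem P T \<longleftrightarrow> continuous_on UNIV T \<and> (\<forall>s. T s > 0) \<and>
     (\<exists>\<eta>. continuous_on UNIV \<eta> \<and>
        (\<forall>p\<in>P. sint (fst p) \<eta> \<ge> sint (snd p) (\<lambda>s. 1 / T s)))"

definition strong_clausius :: "('a::topological_space) vp set \<Rightarrow> ('a \<Rightarrow> real) \<Rightarrow> bool" where
  "strong_clausius P T \<longleftrightarrow> continuous_on UNIV T \<and> (\<forall>s. T s > 0) \<and>
     (\<forall>x. in_hat P x \<longrightarrow> (\<forall>A\<in>sets borel. sval (fst x) A = 0) \<longrightarrow>
          sint (snd x) (\<lambda>s. 1 / T s) \<le> 0)"

end

(* A continuous positive T is a Clausius-Duhem scale exactly when g = -1/T lies in the convex
   cone of continuous g for which some continuous eta makes  int eta d(Delta m) + int g dq  nonnegative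
   on all of P.  If -1/T were at positive sup-distance from this cone, Hahn-Banach would separate them
   by a bounded functional on C(Sigma) that is nonpositive on the cone.  By the Jordan decomposition
   and the Riesz representation theorem this functional is integration against a regular signed
   measure nu, and a bipolar argument for the weak-star topology puts (0, -nu) into hat P.  The strong
   Clausius inequality at (0, -nu) contradicts the separation.  So some g in the cone is uniformly
   close to -1/T, and T' = -1/g is a Clausius-Duhem scale uniformly close to T. *)

theory Submission
  imports Defs
begin

section \<open>Hahn-Banach for spaces of real functions\<close>

definition function_subspace :: "('x \<Rightarrow> real) set \<Rightarrow> bool" where
  "function_subspace V \<longleftrightarrow>
     (\<forall>f\<in>V. \<forall>g\<in>V. (\<lambda>x. f x + g x) \<in> V) \<and> (\<forall>f\<in>V. \<forall>c. (\<lambda>x. c * f x) \<in> V)"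

definition sublinear_on :: "('x \<Rightarrow> real) set \<Rightarrow> (('x \<Rightarrow> real) \<Rightarrow> real) \<Rightarrow> bool" where
  "sublinear_on V p \<longleftrightarrow>
     (\<forall>f\<in>V. \<forall>g\<in>V. p (\<lambda>x. f x + g x) \<le> p f + p g) \<and>
     (\<forall>f\<in>V. \<forall>c\<ge>0. p (\<lambda>x. c * f x) = c * p f)"

definition linear_on :: "('x \<Rightarrow> real) set \<Rightarrow> (('x \<Rightarrow> real) \<Rightarrow> real) \<Rightarrow> bool" where
  "linear_on V L \<longleftrightarrow>
     (\<forall>f\<in>V. \<forall>g\<in>V. L (\<lambda>x. f x + g x) = L f + L g) \<and> (\<forall>f\<in>V. \<forall>c. L (\<lambda>x. c * f x) = c * L f)"

lemma function_subspace_add: "function_subspace V \<Longrightarrow> f \<in> V \<Longrightarrow> g \<in> V \<Longrightarrow> (\<lambda>x. f x + g x) \<in> V"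
  unfolding function_subspace_def by blast

lemma function_subspace_scale: "function_subspace V \<Longrightarrow> f \<in> V \<Longrightarrow> (\<lambda>x. c * f x) \<in> V"
  unfolding function_subspace_def by blast

lemma function_subspace_lincomb:
  "function_subspace V \<Longrightarrow> f \<in> V \<Longrightarrow> g \<in> V \<Longrightarrow> (\<lambda>x. a * f x + b * g x) \<in> V"
  by (intro function_subspace_add function_subspace_scale)

lemma sublinear_onD:
  assumes "sublinear_on V p"
  shows "f \<in> V \<Longrightarrow> g \<in> V \<Longrightarrow> p (\<lambda>x. f x + g x) \<le> p f + p g"
    and "f \<in> V \<Longrightarrow> c \<ge> 0 \<Longrightarrow> p (\<lambda>x. c * f x) = c * p f"
  using assms unfolding sublinear_on_def by blast+

lemma linear_onD:
  assumes "linear_on V L"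
  shows "f \<in> V \<Longrightarrow> g \<in> V \<Longrightarrow> L (\<lambda>x. f x + g x) = L f + L g"
    and "f \<in> V \<Longrightarrow> L (\<lambda>x. c * f x) = c * L f"
  using assms unfolding linear_on_def by blast+

lemma linear_on_sum:
  assumes "function_subspace V" "linear_on V L" "V \<noteq> {}" "finite I" "\<And>i. i \<in> I \<Longrightarrow> b i \<in> V"
  shows "(\<lambda>x. \<Sum>i\<in>I. a i * b i x) \<in> V \<and> L (\<lambda>x. \<Sum>i\<in>I. a i * b i x) = (\<Sum>i\<in>I. a i * L (b i))"
  using assms(4,5)
proof (induction I rule: finite_induct)
  case empty
  obtain z where z: "z \<in> V" using assms(3) by blast
  have "(\<lambda>x. 0 * z x) \<in> V" by (rule function_subspace_scale[OF assms(1) z])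
  moreover have "L (\<lambda>x. 0 * z x) = 0 * L z" by (rule linear_onD(2)[OF assms(2) z])
  ultimately show ?case by simp
next
  case (insert j I)
  then have "(\<lambda>x. a j * b j x) \<in> V" "(\<lambda>x. \<Sum>i\<in>I. a i * b i x) \<in> V"
    using assms(1) by (auto intro: function_subspace_scale)
  then show ?case
    using insert function_subspace_add[OF assms(1)] linear_onD[OF assms(2)] by auto
qed

lemma linear_on_finitely_supported:
  fixes I :: "'i set"
  assumes I: "finite I" and L: "linear_on {v. \<forall>i. i \<notin> I \<longrightarrow> v i = 0} L"
    and v: "\<forall>i. i \<notin> I \<longrightarrow> v i = 0"
  shows "L v = (\<Sum>i\<in>I. v i * L (\<lambda>j. if j = i then 1 else 0))"
proof -
  have W: "function_subspace {v :: 'i \<Rightarrow> real. \<forall>i. i \<notin> I \<longrightarrow> v i = 0}"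
    unfolding function_subspace_def by auto
  have "v j = (\<Sum>i\<in>I. v i * (if j = i then 1 else 0))" for j
  proof -
    have "(\<Sum>i\<in>I. v i * (if j = i then 1 else 0)) = (\<Sum>i\<in>I. if j = i then v i else 0)"
      by (rule sum.cong) auto
    then show ?thesis using I v by auto
  qed
  then have "v = (\<lambda>j. \<Sum>i\<in>I. v i * (if j = i then 1 else 0))" by blast
  then have "L v = L (\<lambda>j. \<Sum>i\<in>I. v i * (if j = i then 1 else 0))" by (rule arg_cong)
  also have "\<dots> = (\<Sum>i\<in>I. v i * L (\<lambda>j. if j = i then 1 else 0))"
  proof -
    have "(\<lambda>i. 0) \<in> {v :: 'i \<Rightarrow> real. \<forall>i. i \<notin> I \<longrightarrow> v i = 0}" by simp
    then have "{v :: 'i \<Rightarrow> real. \<forall>i. i \<notin> I \<longrightarrow> v i = 0} \<noteq> {}" by blast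
    from linear_on_sum[OF W L this I, of "\<lambda>i j. if j = i then 1 else 0" v] show ?thesis by simp
  qed
  finally show ?thesis .
qed

lemma sublinear_on_scale_ge:
  assumes "sublinear_on V p" "function_subspace V" "z \<in> V"
  shows "t * p z \<le> p (\<lambda>x. t * z x)"
proof (cases "t < 0")
  case True
  have mz: "(\<lambda>x. (-1) * z x) \<in> V" using assms(2,3) by (rule function_subspace_scale)
  have "p (\<lambda>x. 0 * z x) = 0 * p z" by (rule sublinear_onD(2)[OF assms(1,3)]) simp
  then have "- p z \<le> p (\<lambda>x. (-1) * z x)"
    using sublinear_onD(1)[OF assms(1,3) mz] by simp
  then have "(-t) * (- p z) \<le> (-t) * p (\<lambda>x. (-1) * z x)"
    using True by (intro mult_left_mono) auto
  moreover have "p (\<lambda>x. (-t) * ((-1) * z x)) = (-t) * p (\<lambda>x. (-1) * z x)"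
    using sublinear_onD(2)[OF assms(1) mz, of "-t"] True by simp
  ultimately show ?thesis by simp
next
  case False
  then show ?thesis using sublinear_onD(2)[OF assms(1,3)] by simp
qed

lemma sublinear_on_rescale:
  assumes "sublinear_on V p" "function_subspace V" "a \<in> V" "y \<in> V" "u > 0"
  shows "p (\<lambda>x. a x + (u * d) * y x) = u * p (\<lambda>x. (1/u) * a x + d * y x)"
proof -
  have "(\<lambda>x. a x + (u * d) * y x) = (\<lambda>x. u * ((1/u) * a x + d * y x))"
    using assms(5) by (auto simp: fun_eq_iff field_simps)
  then show ?thesis
    using sublinear_onD(2)[OF assms(1) function_subspace_lincomb[OF assms(2-4), of "1/u" d], of u] assms(5)
    by simp
qed

text \<open>Partial linear functionals are handled through their graphs, so that Zorn's lemma applies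
  to them as sets ordered by inclusion.\<close>

definition linear_graph :: "(('x \<Rightarrow> real) \<times> real) set \<Rightarrow> bool" where
  "linear_graph G \<longleftrightarrow>
     (\<forall>a r s. (a, r) \<in> G \<longrightarrow> (a, s) \<in> G \<longrightarrow> r = s) \<and>
     (\<forall>a r b s. (a, r) \<in> G \<longrightarrow> (b, s) \<in> G \<longrightarrow> ((\<lambda>x. a x + b x), r + s) \<in> G) \<and>
     (\<forall>a r c. (a, r) \<in> G \<longrightarrow> ((\<lambda>x. c * a x), c * r) \<in> G)"

definition dominated_extensions ::
    "('x \<Rightarrow> real) set \<Rightarrow> (('x \<Rightarrow> real) \<Rightarrow> real) \<Rightarrow> ('x \<Rightarrow> real) \<Rightarrow> (('x \<Rightarrow> real) \<times> real) set set" where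
  "dominated_extensions V p z =
     {G. G \<subseteq> V \<times> UNIV \<and> (z, p z) \<in> G \<and> linear_graph G \<and> (\<forall>a r. (a, r) \<in> G \<longrightarrow> r \<le> p a)}"

lemma linear_graphD:
  assumes "linear_graph G"
  shows "(a, r) \<in> G \<Longrightarrow> (a, s) \<in> G \<Longrightarrow> r = s"
    and "(a, r) \<in> G \<Longrightarrow> (b, s) \<in> G \<Longrightarrow> ((\<lambda>x. a x + b x), r + s) \<in> G"
    and "(a, r) \<in> G \<Longrightarrow> ((\<lambda>x. c * a x), c * r) \<in> G"
  using assms unfolding linear_graph_def by simp_all

lemma dominated_extensionsD:
  assumes "G \<in> dominated_extensions V p z"
  shows "G \<subseteq> V \<times> UNIV" "(z, p z) \<in> G" "linear_graph G" "(a, r) \<in> G \<Longrightarrow> r \<le> p a"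
  using assms by (simp_all add: dominated_extensions_def)

lemma line_in_dominated_extensions:
  assumes "sublinear_on V p" "function_subspace V" "z \<in> V"
  shows "{((\<lambda>x. t * z x), t * p z) | t. True} \<in> dominated_extensions V p z"
proof -
  let ?G = "{((\<lambda>x. t * z x), t * p z) | t. True}"
  have "p (\<lambda>x. 0 * z x) = 0 * p z" by (rule sublinear_onD(2)[OF assms(1,3)]) simp
  then have pz0: "p (\<lambda>x. 0) = 0" by simp
  have func: "t * p z = t' * p z" if "(\<lambda>x. t * z x) = (\<lambda>x. t' * z x)" for t t'
  proof (cases "t = t'")
    case False
    have "\<forall>x. t * z x = t' * z x" using that by metis
    then have "\<forall>x. z x = 0" using False by auto
    then have "z = (\<lambda>x. 0)" by auto
    then show ?thesis using pz0 by simp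
  qed simp
  note dom = sublinear_on_scale_ge[OF assms]
  show ?thesis unfolding dominated_extensions_def linear_graph_def
  proof (rule CollectI, intro conjI allI impI)
    show "?G \<subseteq> V \<times> UNIV" using assms(2,3) unfolding function_subspace_def by auto
    show "(z, p z) \<in> ?G" by (rule CollectI, rule exI[of _ 1]) simp
  next
    fix a r s assume h1: "(a,r) \<in> ?G" and h2: "(a,s) \<in> ?G"
    obtain t where "a = (\<lambda>x. t * z x)" "r = t * p z" using h1 by blast
    moreover obtain t' where "a = (\<lambda>x. t' * z x)" "s = t' * p z" using h2 by blast
    ultimately show "r = s" using func by metis
  next
    fix a r b s assume h1: "(a,r) \<in> ?G" and h2: "(b,s) \<in> ?G"
    obtain t where "a = (\<lambda>x. t * z x)" "r = t * p z" using h1 by blast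
    moreover obtain t' where "b = (\<lambda>x. t' * z x)" "s = t' * p z" using h2 by blast
    ultimately show "((\<lambda>x. a x + b x), r+s) \<in> ?G"
      by (intro CollectI exI[of _ "t+t'"]) (auto simp: algebra_simps)
  next
    fix a r c assume "(a,r) \<in> ?G"
    then obtain t where "a = (\<lambda>x. t * z x)" "r = t * p z" by auto
    then show "((\<lambda>x. c * a x), c*r) \<in> ?G"
      by (intro CollectI exI[of _ "c*t"]) (auto simp: algebra_simps)
  next
    fix a r assume "(a,r) \<in> ?G"
    then obtain t where "a = (\<lambda>x. t * z x)" "r = t * p z" by auto
    then show "r \<le> p a" using dom by simp
  qed
qed

lemma Union_chain_in_dominated_extensions:
  assumes "C \<in> chains (dominated_extensions V p z)" "C \<noteq> {}"
  shows "\<Union>C \<in> dominated_extensions V p z"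
proof -
  have C: "C \<subseteq> dominated_extensions V p z" using assms(1) chainsD2 by blast
  have common: "\<exists>G\<in>C. u \<in> G \<and> v \<in> G" if "u \<in> \<Union>C" "v \<in> \<Union>C" for u v
    using that chainsD[OF assms(1)] by blast
  have "linear_graph (\<Union>C)"
    unfolding linear_graph_def
  proof (intro conjI allI impI)
    fix a r s assume "(a, r) \<in> \<Union>C" "(a, s) \<in> \<Union>C"
    then obtain G where "G \<in> C" "(a, r) \<in> G" "(a, s) \<in> G" using common by blast
    then show "r = s" using C dominated_extensionsD(3) linear_graphD(1) by blast
  next
    fix a r b s assume "(a, r) \<in> \<Union>C" "(b, s) \<in> \<Union>C"
    then obtain G where "G \<in> C" "(a, r) \<in> G" "(b, s) \<in> G" using common by blast
    then show "((\<lambda>x. a x + b x), r + s) \<in> \<Union>C"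
      using C dominated_extensionsD(3) linear_graphD(2) by blast
  next
    fix a r c assume "(a, r) \<in> \<Union>C"
    then obtain G where "G \<in> C" "(a, r) \<in> G" by blast
    then show "((\<lambda>x. c * a x), c * r) \<in> \<Union>C"
      using C dominated_extensionsD(3) linear_graphD(3) by blast
  qed
  then show ?thesis
    using C assms(2) unfolding dominated_extensions_def by blast
qed

text \<open>The one-dimensional extension step: the new value c at y must lie between the supremum of
  r - p(a - y) and the infimum of p(b + y) - s over the graph.\<close>

lemma dominated_extension_bounds:
  assumes sl: "sublinear_on V p" and V: "function_subspace V" and G: "G \<in> dominated_extensions V p z"
    and y: "y \<in> V"
  shows "\<exists>c. (\<forall>a r. (a, r) \<in> G \<longrightarrow> r - p (\<lambda>x. a x - y x) \<le> c) \<and>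
             (\<forall>b s. (b, s) \<in> G \<longrightarrow> c \<le> p (\<lambda>x. b x + y x) - s)"
proof -
  have key: "r - p (\<lambda>x. a x - y x) \<le> p (\<lambda>x. b x + y x) - s" if "(a, r) \<in> G" "(b, s) \<in> G" for a r b s
  proof -
    have "a \<in> V" "b \<in> V" using that dominated_extensionsD(1)[OF G] by auto
    then have "(\<lambda>x. a x - y x) \<in> V" "(\<lambda>x. b x + y x) \<in> V"
      using function_subspace_lincomb[OF V _ y, of _ 1 "-1"] function_subspace_lincomb[OF V _ y, of _ 1 1]
      by auto
    then have "p (\<lambda>x. (a x - y x) + (b x + y x)) \<le> p (\<lambda>x. a x - y x) + p (\<lambda>x. b x + y x)"
      by (intro sublinear_onD(1)[OF sl]) auto
    moreover have "r + s \<le> p (\<lambda>x. a x + b x)"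
      using dominated_extensionsD(4)[OF G] linear_graphD(2)[OF dominated_extensionsD(3)[OF G] that] by blast
    ultimately show ?thesis by simp
  qed
  let ?S = "{r - p (\<lambda>x. a x - y x) | a r. (a, r) \<in> G}"
  have "?S \<noteq> {}" using dominated_extensionsD(2)[OF G] by blast
  moreover have "bdd_above ?S"
    using key[OF _ dominated_extensionsD(2)[OF G]] unfolding bdd_above_def by blast
  ultimately show ?thesis
    by (intro exI[of _ "Sup ?S"] conjI allI impI cSup_upper cSup_least) (use key in blast)+
qed

lemma dominated_extension_value:
  assumes sl: "sublinear_on V p" and V: "function_subspace V" and G: "G \<in> dominated_extensions V p z"
    and y: "y \<in> V"
  shows "\<exists>c. \<forall>a r t. (a, r) \<in> G \<longrightarrow> r + t * c \<le> p (\<lambda>x. a x + t * y x)"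
proof -
  obtain c where lower: "\<And>a r. (a, r) \<in> G \<Longrightarrow> r - p (\<lambda>x. a x - y x) \<le> c"
    and upper: "\<And>b s. (b, s) \<in> G \<Longrightarrow> c \<le> p (\<lambda>x. b x + y x) - s"
    using dominated_extension_bounds[OF assms] by blast
  have "r + t * c \<le> p (\<lambda>x. a x + t * y x)" if ar: "(a, r) \<in> G" for a r t
  proof -
    have aV: "a \<in> V" using dominated_extensionsD(1)[OF G] ar by auto
    note Gscale = linear_graphD(3)[OF dominated_extensionsD(3)[OF G] ar]
    note rescale = sublinear_on_rescale[OF sl V aV y]
    consider "t > 0" | "t = 0" | "t < 0" by linarith
    then show ?thesis
    proof cases
      case 1
      have "t * c \<le> t * (p (\<lambda>x. (1/t) * a x + y x) - (1/t) * r)"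
        using upper[OF Gscale[of "1/t"]] 1 by (intro mult_left_mono) auto
      also have "\<dots> = p (\<lambda>x. a x + t * y x) - r"
        using rescale[OF 1, of 1] 1 by (simp add: right_diff_distrib)
      finally show ?thesis by simp
    next
      case 2
      then show ?thesis using dominated_extensionsD(4)[OF G ar] by simp
    next
      case 3
      then have u: "-t > 0" by simp
      have "(-t) * ((1/(-t)) * r - p (\<lambda>x. (1/(-t)) * a x - y x)) \<le> (-t) * c"
        using lower[OF Gscale[of "1/(-t)"]] u by (intro mult_left_mono) auto
      moreover have "(-t) * ((1/(-t)) * r - p (\<lambda>x. (1/(-t)) * a x - y x)) = r - p (\<lambda>x. a x + t * y x)"
        using rescale[OF u, of "-1"] u by (simp add: right_diff_distrib)
      ultimately show ?thesis by simp
    qed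
  qed
  then show ?thesis by blast
qed

lemma linear_graph_extension_unique:
  assumes G: "linear_graph G" and new: "\<nexists>r. (y, r) \<in> G" and "(a1, r1) \<in> G" "(a2, r2) \<in> G"
    and eq: "(\<lambda>x. a1 x + t1 * y x) = (\<lambda>x. a2 x + t2 * y x)"
  shows "t1 = t2 \<and> a1 = a2"
proof -
  have "t1 = t2"
  proof (rule ccontr)
    assume ne: "t1 \<noteq> t2"
    have "((\<lambda>x. a2 x + (-1) * a1 x), r2 + (-1) * r1) \<in> G"
      using linear_graphD(2)[OF G assms(4) linear_graphD(3)[OF G assms(3), of "-1"]] by simp
    from linear_graphD(3)[OF G this, of "1/(t1 - t2)"]
    have "((\<lambda>x. (1/(t1-t2)) * (a2 x + (-1) * a1 x)), (1/(t1-t2)) * (r2 + (-1) * r1)) \<in> G" .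
    moreover have "(\<lambda>x. (1/(t1-t2)) * (a2 x + (-1) * a1 x)) = y"
    proof
      fix x have "a2 x - a1 x = (t1 - t2) * y x" using fun_cong[OF eq, of x] by (simp add: algebra_simps)
      then show "(1/(t1-t2)) * (a2 x + (-1) * a1 x) = y x" using ne by (simp add: field_simps)
    qed
    ultimately show False using new by auto
  qed
  moreover have "a1 = a2" using eq \<open>t1 = t2\<close> by (auto simp: fun_eq_iff)
  ultimately show ?thesis by simp
qed

lemma linear_graph_extension:
  assumes G: "linear_graph G" and new: "\<nexists>r. (y, r) \<in> G"
  shows "linear_graph {((\<lambda>x. a x + t * y x), r + t * c) | a r t. (a, r) \<in> G}"
    (is "linear_graph ?G'")
  unfolding linear_graph_def
proof (intro conjI allI impI)
  fix a r s assume h1: "(a, r) \<in> ?G'" and h2: "(a, s) \<in> ?G'"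
  obtain a1 r1 t1 where e1: "a = (\<lambda>x. a1 x + t1 * y x)" "r = r1 + t1 * c" "(a1, r1) \<in> G"
    using h1 by blast
  obtain a2 r2 t2 where e2: "a = (\<lambda>x. a2 x + t2 * y x)" "s = r2 + t2 * c" "(a2, r2) \<in> G"
    using h2 by blast
  have "(\<lambda>x. a1 x + t1 * y x) = (\<lambda>x. a2 x + t2 * y x)" using e1(1) e2(1) by simp
  then have "t1 = t2 \<and> a1 = a2" by (rule linear_graph_extension_unique[OF G new e1(3) e2(3)])
  then show "r = s" using e1 e2 linear_graphD(1)[OF G] by auto
next
  fix a r b s assume h1: "(a, r) \<in> ?G'" and h2: "(b, s) \<in> ?G'"
  obtain a1 r1 t1 where e1: "a = (\<lambda>x. a1 x + t1 * y x)" "r = r1 + t1 * c" "(a1, r1) \<in> G"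
    using h1 by blast
  obtain a2 r2 t2 where e2: "b = (\<lambda>x. a2 x + t2 * y x)" "s = r2 + t2 * c" "(a2, r2) \<in> G"
    using h2 by blast
  have "((\<lambda>x. a1 x + a2 x), r1 + r2) \<in> G" using linear_graphD(2)[OF G e1(3) e2(3)] .
  moreover have "(\<lambda>x. a x + b x) = (\<lambda>x. (a1 x + a2 x) + (t1 + t2) * y x)"
    using e1 e2 by (auto simp: algebra_simps)
  moreover have "r + s = (r1 + r2) + (t1 + t2) * c" using e1 e2 by (simp add: algebra_simps)
  ultimately show "((\<lambda>x. a x + b x), r + s) \<in> ?G'" unfolding mem_Collect_eq
    by (intro exI[of _ "\<lambda>x. a1 x + a2 x"] exI[of _ "r1 + r2"] exI[of _ "t1 + t2"]) simp
next
  fix a r d assume h1: "(a, r) \<in> ?G'"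
  obtain a1 r1 t1 where e1: "a = (\<lambda>x. a1 x + t1 * y x)" "r = r1 + t1 * c" "(a1, r1) \<in> G"
    using h1 by blast
  have "((\<lambda>x. d * a1 x), d * r1) \<in> G" using linear_graphD(3)[OF G e1(3)] .
  moreover have "(\<lambda>x. d * a x) = (\<lambda>x. d * a1 x + (d * t1) * y x)" using e1 by (auto simp: algebra_simps)
  moreover have "d * r = d * r1 + (d * t1) * c" using e1 by (simp add: algebra_simps)
  ultimately show "((\<lambda>x. d * a x), d * r) \<in> ?G'" unfolding mem_Collect_eq
    by (intro exI[of _ "\<lambda>x. d * a1 x"] exI[of _ "d * r1"] exI[of _ "d * t1"]) simp
qed

lemma dominated_extension_step:
  assumes sl: "sublinear_on V p" and V: "function_subspace V" and G: "G \<in> dominated_extensions V p z"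
    and y: "y \<in> V" and new: "\<nexists>r. (y, r) \<in> G"
  shows "\<exists>G'\<in>dominated_extensions V p z. G \<subset> G'"
proof -
  obtain c where dom: "\<And>a r t. (a, r) \<in> G \<Longrightarrow> r + t * c \<le> p (\<lambda>x. a x + t * y x)"
    using dominated_extension_value[OF sl V G y] by blast
  define G' where "G' = {((\<lambda>x. a x + t * y x), r + t * c) | a r t. (a, r) \<in> G}"
  have "G' \<in> dominated_extensions V p z"
    unfolding dominated_extensions_def mem_Collect_eq
  proof (intro conjI allI impI)
    show "G' \<subseteq> V \<times> UNIV"
      unfolding G'_def using dominated_extensionsD(1)[OF G] function_subspace_lincomb[OF V _ y, of _ 1]
      by fastforce
    show "(z, p z) \<in> G'" unfolding G'_def using dominated_extensionsD(2)[OF G] by force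
    show "linear_graph G'"
      unfolding G'_def by (rule linear_graph_extension[OF dominated_extensionsD(3)[OF G] new])
    show "r \<le> p a" if ar: "(a, r) \<in> G'" for a r
    proof -
      obtain a1 r1 t1 where "a = (\<lambda>x. a1 x + t1 * y x)" "r = r1 + t1 * c" "(a1, r1) \<in> G"
        using ar unfolding G'_def by blast
      then show ?thesis using dom by simp
    qed
  qed
  moreover have "G \<subseteq> G'"
  proof
    fix u assume "u \<in> G"
    then obtain a r where "u = (a, r)" "(a, r) \<in> G" by (cases u) auto
    then show "u \<in> G'" unfolding G'_def by force
  qed
  moreover have "(y, c) \<in> G'"
  proof -
    have "((\<lambda>x. 0 * z x), 0 * p z) \<in> G"
      using linear_graphD(3)[OF dominated_extensionsD(3)[OF G] dominated_extensionsD(2)[OF G]] .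
    then show ?thesis unfolding G'_def mem_Collect_eq
      by (intro exI[of _ "\<lambda>x. 0 * z x"] exI[of _ "0 * p z"] exI[of _ 1]) simp
  qed
  ultimately show ?thesis using new by blast
qed

theorem hahn_banach_function_space:
  assumes sl: "sublinear_on V p" and V: "function_subspace V" and z: "z \<in> V"
  shows "\<exists>L. linear_on V L \<and> (\<forall>f\<in>V. L f \<le> p f) \<and> L z = p z"
proof -
  have "\<forall>C\<in>chains (dominated_extensions V p z). \<exists>U\<in>dominated_extensions V p z. \<forall>X\<in>C. X \<subseteq> U"
  proof
    fix C assume C: "C \<in> chains (dominated_extensions V p z)"
    show "\<exists>U\<in>dominated_extensions V p z. \<forall>X\<in>C. X \<subseteq> U"
    proof (cases "C = {}")
      case True
      then show ?thesis using line_in_dominated_extensions[OF sl V z] by blast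
    next
      case False
      then show ?thesis using Union_chain_in_dominated_extensions[OF C False] by blast
    qed
  qed
  from Zorn_Lemma2[OF this] obtain G where G: "G \<in> dominated_extensions V p z"
    and max: "\<forall>X\<in>dominated_extensions V p z. G \<subseteq> X \<longrightarrow> X = G" by blast
  note Gfun = linear_graphD(1)[OF dominated_extensionsD(3)[OF G]]
    and Gadd = linear_graphD(2)[OF dominated_extensionsD(3)[OF G]]
    and Gsc = linear_graphD(3)[OF dominated_extensionsD(3)[OF G]]
    and Gdom = dominated_extensionsD(4)[OF G]
  have total: "\<exists>r. (y, r) \<in> G" if "y \<in> V" for y
    using dominated_extension_step[OF sl V G that] max by blast
  define L where "L y = (THE r. (y, r) \<in> G)" for y
  have L_eq: "L y = r" if "(y, r) \<in> G" for y r
    unfolding L_def using that Gfun by blast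
  have L_graph: "(y, L y) \<in> G" if "y \<in> V" for y
    using total[OF that] L_eq by blast
  have "linear_on V L"
    unfolding linear_on_def using L_eq[OF Gadd[OF L_graph L_graph]] L_eq[OF Gsc[OF L_graph]] by blast
  moreover have "\<forall>f\<in>V. L f \<le> p f" using Gdom[OF L_graph] by blast
  moreover have "L z = p z" using L_eq[OF dominated_extensionsD(2)[OF G]] .
  ultimately show ?thesis by blast
qed

section \<open>Separation from a convex cone in the sup norm\<close>

definition function_convex_cone :: "('x \<Rightarrow> real) set \<Rightarrow> bool" where
  "function_convex_cone D \<longleftrightarrow> (\<lambda>x. 0) \<in> D \<and>
     (\<forall>w1\<in>D. \<forall>w2\<in>D. (\<lambda>x. w1 x + w2 x) \<in> D) \<and> (\<forall>w\<in>D. \<forall>c\<ge>0. (\<lambda>x. c * w x) \<in> D)"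

lemma function_convex_coneD:
  assumes "function_convex_cone D"
  shows "(\<lambda>x. 0) \<in> D"
    and "w1 \<in> D \<Longrightarrow> w2 \<in> D \<Longrightarrow> (\<lambda>x. w1 x + w2 x) \<in> D"
    and "w \<in> D \<Longrightarrow> c \<ge> 0 \<Longrightarrow> (\<lambda>x. c * w x) \<in> D"
  using assms unfolding function_convex_cone_def by simp_all

definition sup_dist :: "('x \<Rightarrow> real) set \<Rightarrow> ('x \<Rightarrow> real) \<Rightarrow> real" where
  "sup_dist D v = Inf {B. \<exists>w\<in>D. \<forall>x. \<bar>v x - w x\<bar> \<le> B}"

lemma sup_dist_le:
  assumes "w \<in> D" "\<And>x. \<bar>v x - w x\<bar> \<le> B"
  shows "sup_dist D v \<le> B"
  unfolding sup_dist_def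
proof (rule cInf_lower)
  show "B \<in> {B. \<exists>w\<in>D. \<forall>x. \<bar>v x - w x\<bar> \<le> B}" using assms by blast
  show "bdd_below {B. \<exists>w\<in>D. \<forall>x. \<bar>v x - w x\<bar> \<le> B}"
  proof (rule bdd_belowI[of _ 0])
    fix B assume "B \<in> {B. \<exists>w\<in>D. \<forall>x. \<bar>v x - w x\<bar> \<le> B}"
    then obtain w where "\<bar>v x - w x\<bar> \<le> B" for x by blast
    then show "0 \<le> B" by (meson abs_ge_zero order_trans)
  qed
qed

lemma sup_dist_greatest:
  assumes "w0 \<in> D" "\<And>x. \<bar>v x - w0 x\<bar> \<le> B0"
    and "\<And>w B. w \<in> D \<Longrightarrow> (\<forall>x. \<bar>v x - w x\<bar> \<le> B) \<Longrightarrow> c \<le> B"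
  shows "c \<le> sup_dist D v"
  unfolding sup_dist_def
  by (rule cInf_greatest) (use assms in blast)+

context
  fixes V D :: "('x \<Rightarrow> real) set"
  assumes V: "function_subspace V" and bounded: "\<And>v. v \<in> V \<Longrightarrow> \<exists>B. \<forall>x. \<bar>v x\<bar> \<le> B"
    and D: "function_convex_cone D"
begin

lemma sup_dist_greatest_bounded:
  assumes "v \<in> V" "\<And>w B. w \<in> D \<Longrightarrow> (\<forall>x. \<bar>v x - w x\<bar> \<le> B) \<Longrightarrow> c \<le> B"
  shows "c \<le> sup_dist D v"
proof -
  from bounded[OF assms(1)] obtain B0 where "\<forall>x. \<bar>v x - 0\<bar> \<le> B0" by auto
  then show ?thesis
    using sup_dist_greatest[OF function_convex_coneD(1)[OF D], of v B0] assms(2) by blast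
qed

lemma sup_dist_add_le:
  assumes f: "f \<in> V" and g: "g \<in> V"
  shows "sup_dist D (\<lambda>x. f x + g x) \<le> sup_dist D f + sup_dist D g"
proof -
  have "sup_dist D (\<lambda>x. f x + g x) - sup_dist D f \<le> B2"
    if w2: "w2 \<in> D" "\<forall>x. \<bar>g x - w2 x\<bar> \<le> B2" for w2 B2
  proof -
    have "sup_dist D (\<lambda>x. f x + g x) - B2 \<le> B1"
      if w1: "w1 \<in> D" "\<forall>x. \<bar>f x - w1 x\<bar> \<le> B1" for w1 B1
    proof -
      have "\<bar>(f x + g x) - (w1 x + w2 x)\<bar> \<le> B1 + B2" for x
        using w1(2)[rule_format, of x] w2(2)[rule_format, of x] by linarith
      then have "sup_dist D (\<lambda>x. f x + g x) \<le> B1 + B2"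
        by (intro sup_dist_le[OF function_convex_coneD(2)[OF D w1(1) w2(1)]])
      then show ?thesis by simp
    qed
    then have "sup_dist D (\<lambda>x. f x + g x) - B2 \<le> sup_dist D f"
      by (intro sup_dist_greatest_bounded[OF f]) blast
    then show ?thesis by simp
  qed
  then have "sup_dist D (\<lambda>x. f x + g x) - sup_dist D f \<le> sup_dist D g"
    by (intro sup_dist_greatest_bounded[OF g]) blast
  then show ?thesis by simp
qed

lemma sup_dist_scale_le:
  assumes f: "f \<in> V" and c: "c > 0"
  shows "sup_dist D (\<lambda>x. c * f x) \<le> c * sup_dist D f"
proof -
  have "sup_dist D (\<lambda>x. c * f x) / c \<le> B" if "w \<in> D" "\<forall>x. \<bar>f x - w x\<bar> \<le> B" for w B
  proof -
    have "\<bar>c * f x - c * w x\<bar> \<le> c * B" for x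
      using that(2) c by (simp add: abs_mult flip: right_diff_distrib)
    then have "sup_dist D (\<lambda>x. c * f x) \<le> c * B"
      by (intro sup_dist_le[OF function_convex_coneD(3)[OF D that(1) less_imp_le[OF c]]])
    then show ?thesis using c by (simp add: field_simps)
  qed
  then have "sup_dist D (\<lambda>x. c * f x) / c \<le> sup_dist D f"
    by (intro sup_dist_greatest_bounded[OF f]) blast
  then show ?thesis using c by (simp add: field_simps)
qed

lemma sublinear_on_sup_dist: "sublinear_on V (sup_dist D)"
  unfolding sublinear_on_def
proof (intro conjI ballI allI impI)
  fix f g assume "f \<in> V" "g \<in> V"
  then show "sup_dist D (\<lambda>x. f x + g x) \<le> sup_dist D f + sup_dist D g"
    by (rule sup_dist_add_le)
next
  fix f and c :: real assume f: "f \<in> V" and "c \<ge> 0"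
  show "sup_dist D (\<lambda>x. c * f x) = c * sup_dist D f"
  proof (cases "c = 0")
    case True
    have "sup_dist D (\<lambda>x. 0 * f x) \<le> 0"
      by (rule sup_dist_le[OF function_convex_coneD(1)[OF D]]) simp
    moreover have "0 \<le> sup_dist D (\<lambda>x. 0 * f x)"
      using function_subspace_scale[OF V f, of 0] by (intro sup_dist_greatest_bounded) auto
    ultimately show ?thesis using True by simp
  next
    case False
    with \<open>c \<ge> 0\<close> have c: "c > 0" by simp
    have "sup_dist D f = sup_dist D (\<lambda>x. (1/c) * (c * f x))" using c by simp
    also have "\<dots> \<le> (1/c) * sup_dist D (\<lambda>x. c * f x)"
      using c by (intro sup_dist_scale_le function_subspace_scale[OF V f]) auto
    finally have "c * sup_dist D f \<le> sup_dist D (\<lambda>x. c * f x)"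
      using c by (simp add: field_simps)
    then show ?thesis using sup_dist_scale_le[OF f c] by simp
  qed
qed

theorem separation_from_convex_cone:
  assumes DV: "D \<subseteq> V" and z: "z \<in> V" and far: "\<And>w. w \<in> D \<Longrightarrow> \<exists>x. \<delta> < \<bar>z x - w x\<bar>"
  shows "\<exists>L. linear_on V L \<and> (\<forall>w\<in>D. L w \<le> 0) \<and> \<delta> \<le> L z \<and>
           (\<forall>v\<in>V. \<forall>B. (\<forall>x. \<bar>v x\<bar> \<le> B) \<longrightarrow> L v \<le> B)"
proof -
  obtain L where L: "linear_on V L" "\<forall>f\<in>V. L f \<le> sup_dist D f" "L z = sup_dist D z"
    using hahn_banach_function_space[OF sublinear_on_sup_dist V z] by blast
  have "L w \<le> 0" if "w \<in> D" for w
    using L(2) DV that sup_dist_le[OF that, of w 0] by fastforce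
  moreover have "\<delta> \<le> L z"
  proof -
    have "\<delta> \<le> B" if "w \<in> D" "\<forall>x. \<bar>z x - w x\<bar> \<le> B" for w B
      using far[OF that(1)] that(2) by (meson less_imp_le order_trans)
    then show ?thesis using L(3) sup_dist_greatest_bounded[OF z] by auto
  qed
  moreover have "L v \<le> B" if "v \<in> V" "\<forall>x. \<bar>v x\<bar> \<le> B" for v B
    using L(2) that sup_dist_le[OF function_convex_coneD(1)[OF D], of v B] by fastforce
  ultimately show ?thesis using L(1) by blast
qed

end

section \<open>The Riesz representation theorem\<close>

lemma normal_space_compact_UNIV:
  assumes "compact (UNIV::'a::t2_space set)"
  shows "normal_space (euclidean::'a topology)"
proof (rule compact_Hausdorff_or_regular_imp_normal_space)
  show "compact_space (euclidean::'a topology)"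
    using assms by (simp add: compact_space_def compactin_euclidean_iff)
  show "Hausdorff_space (euclidean::'a topology) \<or> regular_space (euclidean::'a topology)"
    unfolding Hausdorff_space_def disjnt_def using hausdorff by auto
qed

lemma separation_closed_compact_UNIV:
  fixes S T :: "'a::t2_space set"
  assumes "compact (UNIV::'a set)" "closed S" "closed T" "S \<inter> T = {}"
  shows "\<exists>U V. open U \<and> open V \<and> S \<subseteq> U \<and> T \<subseteq> V \<and> U \<inter> V = {}"
  using normal_space_compact_UNIV[OF assms(1)] assms(2-4) unfolding normal_space_def
  by (auto simp: disjnt_def)

lemma Urysohn_compact_UNIV:
  fixes S T :: "'a::t2_space set"
  assumes "compact (UNIV::'a set)" "closed S" "closed T" "S \<inter> T = {}"
  shows "\<exists>f. continuous_on UNIV f \<and> (\<forall>x. 0 \<le> f x \<and> f x \<le> (1::real)) \<and>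
             (\<forall>x\<in>S. f x = 1) \<and> (\<forall>x\<in>T. f x = 0)"
proof -
  obtain f where f: "continuous_map euclidean (top_of_set {0..1::real}) f" "f ` T \<subseteq> {0}" "f ` S \<subseteq> {1}"
    using Urysohn_lemma[OF normal_space_compact_UNIV[OF assms(1)], of T S 0 1] assms(2-4)
    by (auto simp: disjnt_def)
  then have "continuous_on UNIV f" "\<forall>x. 0 \<le> f x \<and> f x \<le> 1"
    by (auto simp: continuous_map_in_subtopology continuous_map_iff_continuous2 image_subset_iff)
  then show ?thesis using f(2,3) by blast
qed

lemma bounded_continuous_compact_UNIV:
  fixes g :: "'a::topological_space \<Rightarrow> real"
  assumes "compact (UNIV::'a set)" "continuous_on UNIV g"
  shows "\<exists>B. \<forall>x. \<bar>g x\<bar> \<le> B"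
proof -
  have "bounded (g ` UNIV)" using compact_continuous_image[OF assms(2,1)] by (rule compact_imp_bounded)
  then show ?thesis unfolding bounded_iff by auto
qed

text \<open>Rudin's f \<prec> U; since the space is compact, the closed set K plays the role of Rudin's
  compact support.\<close>

definition subordinate :: "('a::topological_space \<Rightarrow> real) \<Rightarrow> 'a set \<Rightarrow> bool" where
  "subordinate f U \<longleftrightarrow> continuous_on UNIV f \<and> (\<forall>x. 0 \<le> f x \<and> f x \<le> 1) \<and>
     (\<exists>K. closed K \<and> K \<subseteq> U \<and> (\<forall>x. x \<notin> K \<longrightarrow> f x = 0))"

lemma subordinate_zero: "subordinate (\<lambda>x. 0) U"
  unfolding subordinate_def by auto

lemma subordinate_mono: "subordinate f U \<Longrightarrow> U \<subseteq> V \<Longrightarrow> subordinate f V"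
  unfolding subordinate_def by blast

lemma subordinate_empty: "subordinate f {} \<Longrightarrow> f = (\<lambda>x. 0)"
  unfolding subordinate_def by auto

lemma subordinate_exists:
  fixes K U :: "'a::t2_space set"
  assumes "compact (UNIV::'a set)" "closed K" "open U" "K \<subseteq> U"
  shows "\<exists>g. subordinate g U \<and> (\<forall>x\<in>K. g x = 1)"
proof -
  have "closed (-U)" "K \<inter> -U = {}" using assms(3,4) by auto
  from separation_closed_compact_UNIV[OF assms(1,2) this]
  obtain W W' where W: "open W" "open W'" "K \<subseteq> W" "-U \<subseteq> W'" "W \<inter> W' = {}"
    by blast
  obtain g :: "'a \<Rightarrow> real" where g: "continuous_on UNIV g" "\<forall>x. 0 \<le> g x \<and> g x \<le> 1"
    "\<forall>x\<in>K. g x = 1" "\<forall>x\<in>-W. g x = 0"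
    using Urysohn_compact_UNIV[OF assms(1,2), of "-W"] W by auto
  have "closed (-W')" "-W' \<subseteq> U" "\<forall>x. x \<notin> -W' \<longrightarrow> g x = 0" using W g by auto
  then show ?thesis unfolding subordinate_def using g by blast
qed

lemma sum_halves_le: "0 \<le> e \<Longrightarrow> (\<Sum>i<n. e / 2 ^ Suc i) \<le> (e::real)"
proof -
  have "(\<Sum>i<n. e / 2 ^ Suc i) = e * (1 - 1 / 2 ^ n)"
    by (induction n) (auto simp: field_simps)
  then show "0 \<le> e \<Longrightarrow> (\<Sum>i<n. e / 2 ^ Suc i) \<le> e" by (simp add: mult_left_le)
qed

lemma abs_diff_sums_le_telescope:
  fixes m a b :: "nat \<Rightarrow> real"
  assumes "\<And>k. m (Suc k) \<le> a k \<and> a k \<le> m k" "\<And>k. m (Suc k) \<le> b k \<and> b k \<le> m k"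
  shows "\<bar>(\<Sum>k<n. a k) - (\<Sum>k<n. b k)\<bar> \<le> m 0 - m n"
proof -
  have "(\<Sum>k<n. m k) - (\<Sum>k<n. m (Suc k)) = m 0 - m n"
    using sum_lessThan_telescope'[of m n] by (simp add: sum_subtractf)
  moreover have "(\<Sum>k<n. m (Suc k)) \<le> (\<Sum>k<n. a k)" "(\<Sum>k<n. a k) \<le> (\<Sum>k<n. m k)"
    "(\<Sum>k<n. m (Suc k)) \<le> (\<Sum>k<n. b k)" "(\<Sum>k<n. b k) \<le> (\<Sum>k<n. m k)"
    using assms by (auto intro: sum_mono)
  ultimately show ?thesis by linarith
qed

lemma sum_unit_slices: "0 \<le> y \<Longrightarrow> (\<Sum>k<n. min 1 (max 0 (y - real k))) = min y (real n)"
proof (induction n)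
  case (Suc n)
  then show ?case by (cases "y \<le> real n") (auto simp: min_def max_def)
qed simp

definition level_slice :: "nat \<Rightarrow> ('a \<Rightarrow> real) \<Rightarrow> nat \<Rightarrow> 'a \<Rightarrow> real" where
  "level_slice n f k x = min 1 (max 0 (real n * f x - real k))"

lemma level_slice:
  assumes "n > 0"
  shows "0 \<le> level_slice n f k x \<and> level_slice n f k x \<le> 1"
    and "f x < real k / real n \<Longrightarrow> level_slice n f k x = 0"
    and "real (Suc k) / real n \<le> f x \<Longrightarrow> level_slice n f k x = 1"
    and "0 \<le> f x \<Longrightarrow> f x \<le> 1 \<Longrightarrow> f x = (1 / real n) * (\<Sum>k<n. level_slice n f k x)"
proof -
  show "0 \<le> level_slice n f k x \<and> level_slice n f k x \<le> 1" by (simp add: level_slice_def)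
  show "f x < real k / real n \<Longrightarrow> level_slice n f k x = 0"
    "real (Suc k) / real n \<le> f x \<Longrightarrow> level_slice n f k x = 1"
    using assms by (simp_all add: level_slice_def field_simps)
  assume "0 \<le> f x" "f x \<le> 1"
  then have "(\<Sum>k<n. level_slice n f k x) = real n * f x"
    unfolding level_slice_def using sum_unit_slices[of "real n * f x" n] by (simp add: mult_left_le)
  then show "f x = (1 / real n) * (\<Sum>k<n. level_slice n f k x)" using assms by simp
qed

lemma continuous_on_level_slice: "continuous_on UNIV f \<Longrightarrow> continuous_on UNIV (level_slice n f k)"
  unfolding level_slice_def[abs_def] by (intro continuous_intros)

locale positive_functional =
  fixes L :: "('a::t2_space \<Rightarrow> real) \<Rightarrow> real"
  assumes UNIV_compact: "compact (UNIV::'a set)"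
    and add: "\<And>f g. continuous_on UNIV f \<Longrightarrow> continuous_on UNIV g \<Longrightarrow> L (\<lambda>x. f x + g x) = L f + L g"
    and scale: "\<And>f c. continuous_on UNIV f \<Longrightarrow> L (\<lambda>x. c * f x) = c * L f"
    and nonneg: "\<And>f. continuous_on UNIV f \<Longrightarrow> (\<forall>x. f x \<ge> 0) \<Longrightarrow> L f \<ge> 0"
begin

lemma zero: "L (\<lambda>x. 0) = 0"
  using scale[of "\<lambda>x. 0" 0] by simp

lemma diff: "continuous_on UNIV f \<Longrightarrow> continuous_on UNIV g \<Longrightarrow> L (\<lambda>x. f x - g x) = L f - L g"
  using add[of f "\<lambda>x. (-1) * g x"] scale[of g "-1"] by (simp add: continuous_intros)

lemma mono: "continuous_on UNIV f \<Longrightarrow> continuous_on UNIV g \<Longrightarrow> (\<And>x. f x \<le> g x) \<Longrightarrow> L f \<le> L g"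
  using nonneg[of "\<lambda>x. g x - f x"] diff[of g f] by (auto intro: continuous_intros)

lemma sum: "finite A \<Longrightarrow> (\<And>k. k \<in> A \<Longrightarrow> continuous_on UNIV (g k)) \<Longrightarrow>
    L (\<lambda>x. \<Sum>k\<in>A. g k x) = (\<Sum>k\<in>A. L (g k))"
proof (induction A rule: finite_induct)
  case empty
  then show ?case using zero by simp
next
  case (insert a A)
  then have "L (\<lambda>x. g a x + (\<Sum>k\<in>A. g k x)) = L (g a) + L (\<lambda>x. \<Sum>k\<in>A. g k x)"
    by (intro add continuous_on_sum) auto
  then show ?case using insert by simp
qed

lemma subordinate_le_one: "subordinate f U \<Longrightarrow> L f \<le> L (\<lambda>x. 1)"
  unfolding subordinate_def by (intro mono) auto

text \<open>Rudin's \<mu>(U) for open U, and the outer regular extension \<mu>(A) = inf of \<mu>(U) over open U \<supseteq> A.\<close>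

definition open_content :: "'a set \<Rightarrow> real" where
  "open_content U = Sup {L f | f. subordinate f U}"

definition outer_content :: "'a set \<Rightarrow> real" where
  "outer_content A = Inf {open_content U | U. open U \<and> A \<subseteq> U}"

lemma open_content_upper: "subordinate f U \<Longrightarrow> L f \<le> open_content U"
  unfolding open_content_def
  by (rule cSup_upper) (auto simp: bdd_above_def intro: subordinate_le_one)

lemma open_content_least: "(\<And>f. subordinate f U \<Longrightarrow> L f \<le> c) \<Longrightarrow> open_content U \<le> c"
  unfolding open_content_def by (rule cSup_least) (use subordinate_zero in blast)+

lemma open_content_approx: "e > 0 \<Longrightarrow> \<exists>f. subordinate f U \<and> open_content U - e < L f"
  using open_content_least[of U "open_content U - e"] by force

lemma open_content_nonneg: "0 \<le> open_content U"
  using open_content_upper[OF subordinate_zero] zero by simp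

lemma open_content_le_one: "open_content U \<le> L (\<lambda>x. 1)"
  by (rule open_content_least) (rule subordinate_le_one)

lemma open_content_mono: "U \<subseteq> V \<Longrightarrow> open_content U \<le> open_content V"
  by (rule open_content_least) (rule open_content_upper, erule subordinate_mono)

lemma open_content_empty: "open_content {} = 0"
  using open_content_least[of "{}" 0] open_content_nonneg[of "{}"] subordinate_empty zero
  by fastforce

lemma outer_content_le: "open U \<Longrightarrow> A \<subseteq> U \<Longrightarrow> outer_content A \<le> open_content U"
  unfolding outer_content_def
  by (rule cInf_lower) (auto simp: bdd_below_def intro: open_content_nonneg)

lemma outer_content_greatest:
  "(\<And>U. open U \<Longrightarrow> A \<subseteq> U \<Longrightarrow> c \<le> open_content U) \<Longrightarrow> c \<le> outer_content A"
  unfolding outer_content_def by (rule cInf_greatest) auto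

lemma outer_content_approx: "e > 0 \<Longrightarrow> \<exists>U. open U \<and> A \<subseteq> U \<and> open_content U < outer_content A + e"
  using outer_content_greatest[of A "outer_content A + e"] by force

lemma outer_content_open: "open U \<Longrightarrow> outer_content U = open_content U"
  using outer_content_le[of U U] outer_content_greatest[of U "open_content U"] open_content_mono
  by (simp add: antisym)

lemma outer_content_nonneg: "0 \<le> outer_content A"
  by (rule outer_content_greatest) (rule open_content_nonneg)

lemma outer_content_le_one: "outer_content A \<le> L (\<lambda>x. 1)"
  using outer_content_le[of UNIV A] open_content_le_one[of UNIV] by simp

lemma outer_content_mono: "A \<subseteq> B \<Longrightarrow> outer_content A \<le> outer_content B"
  by (rule outer_content_greatest) (rule outer_content_le, auto)

lemma outer_content_empty: "outer_content {} = 0"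
  using outer_content_open[of "{}"] open_content_empty by simp

lemma subordinate_mult:
  assumes g: "subordinate g U" and h: "continuous_on UNIV h" "\<And>x. 0 \<le> h x \<and> h x \<le> 1"
  shows "subordinate (\<lambda>x. h x * g x) U"
proof -
  obtain K where "closed K" "K \<subseteq> U" "\<forall>x. x \<notin> K \<longrightarrow> g x = 0"
    and "continuous_on UNIV g" "\<forall>x. 0 \<le> g x \<and> g x \<le> 1"
    using g unfolding subordinate_def by blast
  then show ?thesis
    unfolding subordinate_def using h by (auto intro!: continuous_intros exI[of _ K] mult_le_one)
qed

lemma closed_cover_two_opens:
  fixes K :: "'a::t2_space set"
  assumes "compact (UNIV::'a set)" "closed K" "K \<subseteq> U \<union> V" "open U" "open V"
  shows "\<exists>C1 C2. closed C1 \<and> C1 \<subseteq> U \<and> closed C2 \<and> C2 \<subseteq> V \<and> K \<subseteq> C1 \<union> C2"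
proof -
  have "closed (K - V)" "closed (-U)" "(K - V) \<inter> -U = {}" using assms by auto
  from separation_closed_compact_UNIV[OF assms(1) this]
  obtain W1 W2 where "open W1" "open W2" "K - V \<subseteq> W1" "-U \<subseteq> W2" "W1 \<inter> W2 = {}"
    by blast
  then show ?thesis using assms(2) by (intro exI[of _ "K - W2"] exI[of _ "K - W1"]) auto
qed

lemma subordinate_split:
  fixes f :: "'a \<Rightarrow> real"
  assumes f: "subordinate f (U \<union> V)" and U: "open U" and V: "open V"
  shows "\<exists>f1 f2. subordinate f1 U \<and> subordinate f2 V \<and> f = (\<lambda>x. f1 x + f2 x)"
proof -
  obtain K where K: "closed K" "K \<subseteq> U \<union> V" "\<forall>x. x \<notin> K \<longrightarrow> f x = 0"
    and fc: "continuous_on UNIV f" and f01: "\<forall>x. 0 \<le> f x \<and> f x \<le> 1"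
    using f unfolding subordinate_def by blast
  obtain C1 C2 where C: "closed C1" "C1 \<subseteq> U" "closed C2" "C2 \<subseteq> V" "K \<subseteq> C1 \<union> C2"
    using closed_cover_two_opens[OF UNIV_compact K(1,2) U V] by blast
  obtain g1 where g1: "subordinate g1 U" "\<forall>x\<in>C1. g1 x = 1"
    using subordinate_exists[OF UNIV_compact C(1) U C(2)] by blast
  obtain g2 where g2: "subordinate g2 V" "\<forall>x\<in>C2. g2 x = 1"
    using subordinate_exists[OF UNIV_compact C(3) V C(4)] by blast
  have g1c: "continuous_on UNIV g1" and g101: "\<forall>x. 0 \<le> g1 x \<and> g1 x \<le> 1"
    using g1(1) unfolding subordinate_def by blast+
  have "subordinate (\<lambda>x. f x * g1 x) U"
    using subordinate_mult[OF g1(1) fc] f01 by blast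
  moreover have "subordinate (\<lambda>x. (f x * (1 - g1 x)) * g2 x) V"
    using f01 g101 by (intro subordinate_mult[OF g2(1)] continuous_intros fc g1c)
      (auto intro: mult_nonneg_nonneg mult_le_one)
  moreover have "f x = f x * g1 x + (f x * (1 - g1 x)) * g2 x" for x
  proof (cases "x \<in> K")
    case False
    then show ?thesis using K by simp
  next
    case True
    then consider "x \<in> C1" | "x \<notin> C1" "x \<in> C2" using C(5) by blast
    then show ?thesis using g1(2) g2(2) by cases (auto simp: algebra_simps)
  qed
  ultimately show ?thesis by blast
qed

lemma open_content_Un_le:
  assumes "open U" "open V"
  shows "open_content (U \<union> V) \<le> open_content U + open_content V"
proof (rule open_content_least)
  fix f assume "subordinate f (U \<union> V)"
  then obtain f1 f2 where f: "subordinate f1 U" "subordinate f2 V" "f = (\<lambda>x. f1 x + f2 x)"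
    using subordinate_split assms by blast
  then have "L f = L f1 + L f2" using add by (simp add: subordinate_def)
  also have "\<dots> \<le> open_content U + open_content V"
    using open_content_upper[OF f(1)] open_content_upper[OF f(2)] by simp
  finally show "L f \<le> open_content U + open_content V" .
qed

lemma open_content_UN_le:
  fixes U :: "nat \<Rightarrow> 'a set"
  assumes "\<And>i. open (U i)"
  shows "open_content (\<Union>i<n. U i) \<le> (\<Sum>i<n. open_content (U i))"
proof (induction n)
  case 0
  then show ?case using open_content_empty by simp
next
  case (Suc n)
  have "(\<Union>i<Suc n. U i) = (\<Union>i<n. U i) \<union> U n" by (auto simp: lessThan_Suc)
  moreover have "open (\<Union>i<n. U i)" using assms by auto
  ultimately have "open_content (\<Union>i<Suc n. U i) \<le> open_content (\<Union>i<n. U i) + open_content (U n)"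
    using open_content_Un_le[of "\<Union>i<n. U i" "U n"] assms by simp
  then show ?case using Suc by simp
qed

lemma subordinate_finite_subcover:
  fixes U :: "nat \<Rightarrow> 'a set" and f :: "'a \<Rightarrow> real"
  assumes U: "\<And>i. open (U i)" and f: "subordinate f (\<Union>i. U i)"
  shows "\<exists>n. subordinate f (\<Union>i<n. U i)"
proof -
  obtain K where K: "closed K" "K \<subseteq> (\<Union>i. U i)" "\<forall>x. x \<notin> K \<longrightarrow> f x = 0"
    using f unfolding subordinate_def by blast
  have "compact K" using compact_Int_closed[OF UNIV_compact K(1)] by simp
  then obtain C where C: "finite C" "K \<subseteq> \<Union> (U ` C)"
    using K(2) U by (meson compactE_image)
  define n where "n = Suc (Max (insert 0 C))"
  have "\<Union> (U ` C) \<subseteq> (\<Union>i<n. U i)"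
  proof
    fix x assume "x \<in> \<Union> (U ` C)"
    then obtain i where i: "i \<in> C" "x \<in> U i" by blast
    then have "i \<le> Max (insert 0 C)" using C(1) by simp
    then show "x \<in> (\<Union>i<n. U i)" using i(2) unfolding n_def by (auto simp: less_Suc_eq_le)
  qed
  then have "K \<subseteq> (\<Union>i<n. U i)" using C(2) by blast
  then have "subordinate f (\<Union>i<n. U i)"
    using f K(1,3) unfolding subordinate_def by blast
  then show ?thesis by blast
qed

lemma outer_content_countably_subadditive:
  fixes A :: "nat \<Rightarrow> 'a set"
  shows "ennreal (outer_content (\<Union>i. A i)) \<le> (\<Sum>i. ennreal (outer_content (A i)))"
proof (rule ennreal_le_epsilon)
  fix e :: real assume fin: "(\<Sum>i. ennreal (outer_content (A i))) < \<top>" and e: "0 < e"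
  define s where "s = enn2real (\<Sum>i. ennreal (outer_content (A i)))"
  have s: "(\<Sum>i. ennreal (outer_content (A i))) = ennreal s" "0 \<le> s"
    unfolding s_def using fin by (auto simp: less_top)
  have partial: "(\<Sum>i<n. outer_content (A i)) \<le> s" for n
  proof -
    have "(\<Sum>i<n. ennreal (outer_content (A i))) \<le> (\<Sum>i. ennreal (outer_content (A i)))"
      by (rule sum_le_suminf) auto
    then show ?thesis using s by (simp add: sum_ennreal outer_content_nonneg ennreal_le_iff)
  qed
  have "\<forall>i. \<exists>U. open U \<and> A i \<subseteq> U \<and> open_content U < outer_content (A i) + e / 2 ^ Suc i"
    using outer_content_approx e by simp
  then obtain U where U: "\<And>i. open (U i)" "\<And>i. A i \<subseteq> U i"
    "\<And>i. open_content (U i) < outer_content (A i) + e / 2 ^ Suc i"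
    by metis
  have "open_content (\<Union>i. U i) \<le> s + e"
  proof (rule open_content_least)
    fix f assume "subordinate f (\<Union>i. U i)"
    then obtain n where n: "subordinate f (\<Union>i<n. U i)" using subordinate_finite_subcover U(1) by blast
    have "L f \<le> open_content (\<Union>i<n. U i)" by (rule open_content_upper[OF n])
    also have "\<dots> \<le> (\<Sum>i<n. open_content (U i))" by (rule open_content_UN_le[OF U(1)])
    also have "\<dots> \<le> (\<Sum>i<n. outer_content (A i) + e / 2 ^ Suc i)" by (intro sum_mono less_imp_le U(3))
    also have "\<dots> \<le> s + e"
      using partial[of n] sum_halves_le[of e n] e by (simp add: sum.distrib)
    finally show "L f \<le> s + e" .
  qed
  moreover have "outer_content (\<Union>i. A i) \<le> open_content (\<Union>i. U i)"
    using U(1,2) by (intro outer_content_le) auto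
  ultimately have "outer_content (\<Union>i. A i) \<le> s + e" by simp
  then show "ennreal (outer_content (\<Union>i. A i)) \<le> (\<Sum>i. ennreal (outer_content (A i))) + ennreal e"
    using s e by (simp add: ennreal_plus[symmetric] ennreal_leI del: ennreal_plus)
qed

lemma outer_content_Un_le: "outer_content (A \<union> B) \<le> outer_content A + outer_content B"
proof (rule field_le_epsilon)
  fix e :: real assume e: "e > 0"
  obtain U where U: "open U" "A \<subseteq> U" "open_content U < outer_content A + e / 2"
    using outer_content_approx[of "e / 2"] e by auto
  obtain V where V: "open V" "B \<subseteq> V" "open_content V < outer_content B + e / 2"
    using outer_content_approx[of "e / 2"] e by auto
  have "outer_content (A \<union> B) \<le> open_content (U \<union> V)" using U V by (intro outer_content_le) auto
  also have "\<dots> \<le> open_content U + open_content V" by (rule open_content_Un_le[OF U(1) V(1)])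
  finally show "outer_content (A \<union> B) \<le> outer_content A + outer_content B + e" using U V by simp
qed

text \<open>Open sets split every set additively; this is what makes them Caratheodory measurable.\<close>

lemma outer_content_split_open:
  assumes U: "open U"
  shows "outer_content (A \<inter> U) + outer_content (A - U) = outer_content A"
proof (rule antisym)
  show "outer_content A \<le> outer_content (A \<inter> U) + outer_content (A - U)"
    using outer_content_Un_le[of "A \<inter> U" "A - U"] by (simp add: Int_Diff_Un)
  show "outer_content (A \<inter> U) + outer_content (A - U) \<le> outer_content A"
  proof (rule field_le_epsilon)
    fix e :: real assume e: "e > 0"
    obtain W where W: "open W" "A \<subseteq> W" "open_content W < outer_content A + e / 3"
      using outer_content_approx[of "e / 3"] e by auto
    obtain f1 where f1: "subordinate f1 (W \<inter> U)" "open_content (W \<inter> U) - e / 3 < L f1"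
      using open_content_approx[of "e / 3"] e by auto
    obtain K1 where K1: "closed K1" "K1 \<subseteq> W \<inter> U" "\<forall>x. x \<notin> K1 \<longrightarrow> f1 x = 0"
      and f1c: "continuous_on UNIV f1" and f101: "\<forall>x. 0 \<le> f1 x \<and> f1 x \<le> 1"
      using f1(1) unfolding subordinate_def by blast
    obtain f2 where f2: "subordinate f2 (W - K1)" "open_content (W - K1) - e / 3 < L f2"
      using open_content_approx[of "e / 3"] e by auto
    obtain K2 where K2: "closed K2" "K2 \<subseteq> W - K1" "\<forall>x. x \<notin> K2 \<longrightarrow> f2 x = 0"
      and f2c: "continuous_on UNIV f2" and f201: "\<forall>x. 0 \<le> f2 x \<and> f2 x \<le> 1"
      using f2(1) unfolding subordinate_def by blast
    have "subordinate (\<lambda>x. f1 x + f2 x) W" unfolding subordinate_def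
    proof (intro conjI allI exI[of _ "K1 \<union> K2"])
      fix x
      show "0 \<le> f1 x + f2 x" using f101 f201 by (simp add: add_nonneg_nonneg)
      show "f1 x + f2 x \<le> 1" using K1 K2 f101 f201 by (cases "x \<in> K1") auto
    qed (use f1c f2c K1 K2 in \<open>auto intro: continuous_intros\<close>)
    then have "L f1 + L f2 \<le> open_content W" using open_content_upper add[OF f1c f2c] by metis
    moreover have "outer_content (A \<inter> U) \<le> open_content (W \<inter> U)" using W U by (intro outer_content_le) auto
    moreover have "outer_content (A - U) \<le> outer_content (W - K1)" using W K1 by (intro outer_content_mono) auto
    moreover have "outer_content (W - K1) = open_content (W - K1)" using W K1 by (intro outer_content_open) auto
    ultimately show "outer_content (A \<inter> U) + outer_content (A - U) \<le> outer_content A + e"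
      using f1 f2 W by simp
  qed
qed

lemma outer_measure_space_outer_content:
  "outer_measure_space (Pow UNIV) (\<lambda>A. ennreal (outer_content A))"
  unfolding outer_measure_space_def positive_def increasing_def countably_subadditive_def
  using outer_content_empty outer_content_countably_subadditive
  by (auto intro: ennreal_leI outer_content_mono)

lemma open_in_lambda_system:
  assumes "open U"
  shows "U \<in> lambda_system UNIV (Pow UNIV) (\<lambda>A. ennreal (outer_content A))"
  unfolding lambda_system_def
proof (intro CollectI conjI ballI)
  fix X :: "'a set"
  have "(UNIV - U) \<inter> X = X - U" by auto
  then show "ennreal (outer_content (U \<inter> X)) + ennreal (outer_content ((UNIV - U) \<inter> X)) =
      ennreal (outer_content X)"
    using outer_content_split_open[OF assms, of X]
    by (simp add: Int_commute outer_content_nonneg flip: ennreal_plus)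
qed simp

lemma borel_subset_lambda_system:
  "sets borel \<subseteq> lambda_system UNIV (Pow UNIV) (\<lambda>A. ennreal (outer_content A))"
proof -
  have "measure_space UNIV (lambda_system UNIV (Pow UNIV) (\<lambda>A. ennreal (outer_content A)))
      (\<lambda>A. ennreal (outer_content A))"
    by (rule sigma_algebra.caratheodory_lemma[OF sigma_algebra_Pow outer_measure_space_outer_content])
  then have "sigma_algebra UNIV (lambda_system UNIV (Pow UNIV) (\<lambda>A. ennreal (outer_content A)))"
    unfolding measure_space_def by blast
  then show ?thesis
    unfolding sets_borel by (rule sigma_algebra.sigma_sets_subset) (use open_in_lambda_system in auto)
qed

lemma countably_additive_outer_content:
  "countably_additive (sets borel) (\<lambda>A. ennreal (outer_content A))"
proof -
  have "measure_space UNIV (lambda_system UNIV (Pow UNIV) (\<lambda>A. ennreal (outer_content A)))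
      (\<lambda>A. ennreal (outer_content A))"
    by (rule sigma_algebra.caratheodory_lemma[OF sigma_algebra_Pow outer_measure_space_outer_content])
  then show ?thesis
    using borel_subset_lambda_system unfolding measure_space_def countably_additive_def by blast
qed

lemma outer_content_add_compl:
  assumes "A \<in> sets borel"
  shows "outer_content A + outer_content (-A) = outer_content UNIV"
proof -
  have "A \<in> lambda_system UNIV (Pow UNIV) (\<lambda>A. ennreal (outer_content A))"
    using assms borel_subset_lambda_system by blast
  then have "ennreal (outer_content (A \<inter> UNIV)) + ennreal (outer_content ((UNIV - A) \<inter> UNIV)) =
      ennreal (outer_content UNIV)"
    unfolding lambda_system_def by blast
  then have "ennreal (outer_content A + outer_content (-A)) = ennreal (outer_content UNIV)"
    by (simp add: Compl_eq_Diff_UNIV outer_content_nonneg ennreal_plus)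
  then show ?thesis
    using outer_content_nonneg[of A] outer_content_nonneg[of "-A"] outer_content_nonneg[of UNIV]
    by (subst (asm) ennreal_inj) auto
qed

lemma outer_content_inner_approx:
  assumes A: "A \<in> sets borel" and e: "e > 0"
  shows "\<exists>K. compact K \<and> K \<subseteq> A \<and> outer_content A \<le> outer_content K + e"
proof -
  obtain U where U: "open U" "-A \<subseteq> U" "open_content U < outer_content (-A) + e"
    using outer_content_approx[OF e] by blast
  have "compact (-U)" using compact_Int_closed[OF UNIV_compact, of "-U"] U(1) by auto
  moreover have "outer_content A \<le> outer_content (-U) + e"
    using outer_content_add_compl[OF A] outer_content_add_compl[of "-U"] U outer_content_open[OF U(1)]
    by (simp add: borel_closed)
  ultimately show ?thesis using U(2) by blast
qed

definition riesz_measure :: "'a measure" where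
  "riesz_measure = measure_of UNIV (sets borel) (\<lambda>A. ennreal (outer_content A))"

lemma sets_riesz_measure [simp]: "sets riesz_measure = sets borel"
  unfolding riesz_measure_def using sets.sigma_sets_eq[of borel] by (simp add: sets_measure_of)

lemma space_riesz_measure [simp]: "space riesz_measure = UNIV"
  unfolding riesz_measure_def by (simp add: space_measure_of_conv)

lemma emeasure_riesz_measure:
  assumes "A \<in> sets borel"
  shows "emeasure riesz_measure A = ennreal (outer_content A)"
proof -
  have "countably_additive (sets riesz_measure) (\<lambda>A. ennreal (outer_content A))"
    "positive (sets riesz_measure) (\<lambda>A. ennreal (outer_content A))"
    using countably_additive_outer_content by (auto simp: positive_def outer_content_empty)
  then show ?thesis by (intro emeasure_measure_of[OF riesz_measure_def]) (auto simp: assms)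
qed

lemma measure_riesz_measure: "A \<in> sets borel \<Longrightarrow> measure riesz_measure A = outer_content A"
  using emeasure_riesz_measure by (simp add: measure_def outer_content_nonneg)

lemma finite_measure_riesz_measure: "finite_measure riesz_measure"
  by (rule finite_measureI) (simp add: emeasure_riesz_measure)

lemma emeasure_riesz_measure_outer_regular:
  assumes A: "A \<in> sets borel"
  shows "emeasure riesz_measure A = (INF U\<in>{U. open U \<and> A \<subseteq> U}. emeasure riesz_measure U)"
proof (rule antisym)
  show "emeasure riesz_measure A \<le> (INF U\<in>{U. open U \<and> A \<subseteq> U}. emeasure riesz_measure U)"
    using A by (intro INF_greatest) (auto simp: emeasure_riesz_measure ennreal_leI outer_content_mono)
  show "(INF U\<in>{U. open U \<and> A \<subseteq> U}. emeasure riesz_measure U) \<le> emeasure riesz_measure A"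
  proof (rule ennreal_le_epsilon)
    fix e :: real assume e: "0 < e"
    obtain U where U: "open U" "A \<subseteq> U" "open_content U < outer_content A + e"
      using outer_content_approx[OF e] by blast
    have "(INF U\<in>{U. open U \<and> A \<subseteq> U}. emeasure riesz_measure U) \<le> emeasure riesz_measure U"
      using U by (intro INF_lower) auto
    also have "\<dots> \<le> ennreal (outer_content A + e)"
      using U by (simp add: emeasure_riesz_measure outer_content_open ennreal_leI)
    finally show "(INF U\<in>{U. open U \<and> A \<subseteq> U}. emeasure riesz_measure U) \<le> emeasure riesz_measure A + ennreal e"
      using A e by (simp add: emeasure_riesz_measure ennreal_plus outer_content_nonneg)
  qed
qed

lemma emeasure_riesz_measure_inner_regular:
  assumes A: "A \<in> sets borel"
  shows "emeasure riesz_measure A = (SUP K\<in>{K. compact K \<and> K \<subseteq> A}. emeasure riesz_measure K)"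
proof (rule antisym)
  show "(SUP K\<in>{K. compact K \<and> K \<subseteq> A}. emeasure riesz_measure K) \<le> emeasure riesz_measure A"
    using A by (intro SUP_least)
      (auto simp: emeasure_riesz_measure borel_compact ennreal_leI outer_content_mono)
  show "emeasure riesz_measure A \<le> (SUP K\<in>{K. compact K \<and> K \<subseteq> A}. emeasure riesz_measure K)"
  proof (rule ennreal_le_epsilon)
    fix e :: real assume e: "0 < e"
    obtain K where K: "compact K" "K \<subseteq> A" "outer_content A \<le> outer_content K + e"
      using outer_content_inner_approx[OF A e] by blast
    have "emeasure riesz_measure A \<le> emeasure riesz_measure K + ennreal e"
      using A K e by (simp add: emeasure_riesz_measure borel_compact ennreal_leI outer_content_nonneg
          flip: ennreal_plus)
    also have "emeasure riesz_measure K \<le> (SUP K\<in>{K. compact K \<and> K \<subseteq> A}. emeasure riesz_measure K)"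
      using K by (intro SUP_upper) auto
    finally show "emeasure riesz_measure A \<le> (SUP K\<in>{K. compact K \<and> K \<subseteq> A}. emeasure riesz_measure K) + ennreal e"
      by (simp add: add_right_mono)
  qed
qed

lemma regular_fin_borel_riesz_measure: "regular_fin_borel riesz_measure"
  unfolding regular_fin_borel_def
  using sets_riesz_measure finite_measure_riesz_measure emeasure_riesz_measure_outer_regular
    emeasure_riesz_measure_inner_regular
  by blast

lemma outer_content_le_L:
  assumes K: "closed K" and g: "continuous_on UNIV g" "\<And>x. 0 \<le> g x" "\<And>x. x \<in> K \<Longrightarrow> 1 \<le> g x"
  shows "outer_content K \<le> L g"
proof (rule field_le_mult_one_interval)
  fix a :: real assume a: "0 < a" "a < 1"
  define U where "U = {x. a < g x}"
  have U: "open U" unfolding U_def using g(1) by (intro open_Collect_less) (auto intro: continuous_intros)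
  have KU: "K \<subseteq> U" unfolding U_def using g(3) a(2) by force
  have "open_content U \<le> (1/a) * L g"
  proof (rule open_content_least)
    fix h assume h: "subordinate h U"
    then obtain Kh where Kh: "Kh \<subseteq> U" "\<forall>x. x \<notin> Kh \<longrightarrow> h x = 0"
      and hc: "continuous_on UNIV h" and h01: "\<forall>x. 0 \<le> h x \<and> h x \<le> 1"
      unfolding subordinate_def by blast
    have "h x \<le> (1/a) * g x" for x
    proof (cases "x \<in> U")
      case True
      then have "1 < (1/a) * g x" unfolding U_def using a(1) by (simp add: field_simps)
      then show ?thesis using h01 by (meson less_imp_le order_trans)
    next
      case False
      then show ?thesis using Kh g(2)[of x] a(1) by auto
    qed
    then have "L h \<le> L (\<lambda>x. (1/a) * g x)" using hc g(1) by (intro mono continuous_intros)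
    then show "L h \<le> (1/a) * L g" using scale[OF g(1), of "1/a"] by simp
  qed
  then have "outer_content K \<le> (1/a) * L g" using outer_content_le[OF U KU] by simp
  then show "a * outer_content K \<le> L g" using a(1) by (simp add: field_simps)
qed

lemma L_le_outer_content:
  assumes "closed K" "continuous_on UNIV h" "\<And>x. 0 \<le> h x \<and> h x \<le> 1" "\<And>x. x \<notin> K \<Longrightarrow> h x = 0"
  shows "L h \<le> outer_content K"
proof (rule outer_content_greatest)
  fix U assume "open U" "K \<subseteq> U"
  then have "subordinate h U" unfolding subordinate_def using assms by blast
  then show "L h \<le> open_content U" by (rule open_content_upper)
qed

lemma integrable_riesz_measure:
  assumes "continuous_on UNIV g"
  shows "integrable riesz_measure (g::'a \<Rightarrow> real)"
proof -
  from bounded_continuous_compact_UNIV[OF UNIV_compact assms] obtain B where "\<forall>x. \<bar>g x\<bar> \<le> B" ..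
  moreover have "g \<in> borel_measurable riesz_measure"
    using borel_measurable_continuous_onI[OF assms] measurable_cong_sets[OF sets_riesz_measure refl]
    by blast
  ultimately show ?thesis
    by (intro finite_measure.integrable_const_bound[OF finite_measure_riesz_measure, of _ B]) auto
qed

lemma integrable_indicator_riesz_measure:
  "A \<in> sets borel \<Longrightarrow> integrable riesz_measure (indicator A :: 'a \<Rightarrow> real)"
  by (simp add: emeasure_riesz_measure)

lemma integral_riesz_measure_le:
  assumes K: "closed K" and h: "continuous_on UNIV h" "\<And>x. h x \<le> 1" "\<And>x. x \<notin> K \<Longrightarrow> h x \<le> 0"
  shows "integral\<^sup>L riesz_measure h \<le> outer_content K"
proof -
  have "integral\<^sup>L riesz_measure h \<le> integral\<^sup>L riesz_measure (indicator K :: 'a \<Rightarrow> real)"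
  proof (rule integral_mono)
    fix x show "h x \<le> indicator K x" using h by (auto simp: indicator_def)
  qed (use K h(1) in \<open>simp_all add: integrable_riesz_measure integrable_indicator_riesz_measure borel_closed\<close>)
  also have "\<dots> = outer_content K"
    using K by (simp add: measure_riesz_measure borel_closed)
  finally show ?thesis .
qed

lemma outer_content_le_integral:
  assumes K: "closed K" and g: "continuous_on UNIV g" "\<And>x. 0 \<le> g x" "\<And>x. x \<in> K \<Longrightarrow> 1 \<le> g x"
  shows "outer_content K \<le> integral\<^sup>L riesz_measure g"
proof -
  have "outer_content K = integral\<^sup>L riesz_measure (indicator K :: 'a \<Rightarrow> real)"
    using K by (simp add: measure_riesz_measure borel_closed)
  also have "\<dots> \<le> integral\<^sup>L riesz_measure g"
  proof (rule integral_mono)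
    fix x show "indicator K x \<le> g x" using g by (auto simp: indicator_def)
  qed (use K g(1) in \<open>simp_all add: integrable_riesz_measure integrable_indicator_riesz_measure borel_closed\<close>)
  finally show ?thesis .
qed

text \<open>Layer-cake approximation: f is the mean of the n slices f_k = min 1 (max 0 (n f - k)),
  and both L f_k and the integral of f_k lie between the contents of the closed sets
  {f \<ge> (k+1)/n} and {f \<ge> k/n}; summing over k, these bounds telescope.\<close>

lemma integral_riesz_measure_approx:
  assumes fc: "continuous_on UNIV f" and f01: "\<And>x. 0 \<le> f x \<and> f x \<le> 1" and n: "n > 0"
  shows "\<bar>integral\<^sup>L riesz_measure f - L f\<bar> \<le> L (\<lambda>x. 1) / real n"
proof -
  define fk where "fk = level_slice n f"
  define m where "m j = outer_content {x. real j / real n \<le> f x}" for j :: nat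
  have fkc: "continuous_on UNIV (fk k)" for k unfolding fk_def by (rule continuous_on_level_slice[OF fc])
  note fk = level_slice[OF n, where f = f, folded fk_def]
  have f_eq: "f = (\<lambda>x. (1 / real n) * (\<Sum>k<n. fk k x))" by (rule ext) (use fk(4) f01 in blast)
  have cl: "closed {x. real j / real n \<le> f x}" for j
    using closed_Collect_le[OF continuous_on_const fc] .
  have L_bounds: "m (Suc k) \<le> L (fk k) \<and> L (fk k) \<le> m k" for k
    unfolding m_def using fk(1-3)
    by (intro conjI outer_content_le_L L_le_outer_content cl fkc) (auto simp: not_le)
  have I_bounds: "m (Suc k) \<le> integral\<^sup>L riesz_measure (fk k) \<and> integral\<^sup>L riesz_measure (fk k) \<le> m k" for k
    unfolding m_def using fk(1-3)
    by (intro conjI outer_content_le_integral integral_riesz_measure_le cl fkc) (auto simp: not_le)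
  have "L f = (1 / real n) * L (\<lambda>x. \<Sum>k<n. fk k x)"
    by (subst f_eq, rule scale) (intro continuous_on_sum fkc)
  also have "L (\<lambda>x. \<Sum>k<n. fk k x) = (\<Sum>k<n. L (fk k))"
    by (rule sum) (auto intro: fkc)
  moreover have "integral\<^sup>L riesz_measure f = (1 / real n) * (\<Sum>k<n. integral\<^sup>L riesz_measure (fk k))"
    by (subst f_eq) (simp add: integrable_riesz_measure fkc)
  moreover have "\<bar>(\<Sum>k<n. integral\<^sup>L riesz_measure (fk k)) - (\<Sum>k<n. L (fk k))\<bar> \<le> L (\<lambda>x. 1)"
  proof -
    have "\<bar>(\<Sum>k<n. integral\<^sup>L riesz_measure (fk k)) - (\<Sum>k<n. L (fk k))\<bar> \<le> m 0 - m n"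
      by (rule abs_diff_sums_le_telescope[where m = m]) (use I_bounds L_bounds in blast)+
    moreover have "m 0 \<le> L (\<lambda>x. 1)" "0 \<le> m n" unfolding m_def
      by (auto intro: outer_content_le_one outer_content_nonneg)
    ultimately show ?thesis by linarith
  qed
  ultimately show ?thesis
    using n by (simp add: abs_divide divide_right_mono flip: diff_divide_distrib)
qed

lemma integral_riesz_measure_unit:
  assumes fc: "continuous_on UNIV f" and f01: "\<And>x. 0 \<le> f x \<and> f x \<le> 1"
  shows "integral\<^sup>L riesz_measure f = L f"
proof -
  have "\<bar>integral\<^sup>L riesz_measure f - L f\<bar> \<le> e" if e: "e > 0" for e
  proof -
    obtain n :: nat where n: "L (\<lambda>x. 1) / e < real n" using reals_Archimedean2 by blast
    have "0 \<le> L (\<lambda>x. 1)" using nonneg[of "\<lambda>x. 1"] by simp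
    then have n0: "n > 0" using n e by (metis divide_nonneg_pos not_gr0 not_less of_nat_0)
    have "L (\<lambda>x. 1) < e * real n" using n e by (simp add: field_simps)
    then have "L (\<lambda>x. 1) / real n \<le> e" using n0 by (simp add: pos_divide_le_eq)
    then show ?thesis using integral_riesz_measure_approx[OF fc f01 n0] by linarith
  qed
  then show ?thesis by (metis abs_le_zero_iff dense_le eq_iff_diff_eq_0 linorder_not_less)
qed

lemma integral_riesz_measure:
  assumes fc: "continuous_on UNIV f"
  shows "integral\<^sup>L riesz_measure f = L f"
proof -
  from bounded_continuous_compact_UNIV[OF UNIV_compact fc] obtain B0 where B0: "\<forall>x. \<bar>f x\<bar> \<le> B0" ..
  define B where "B = \<bar>B0\<bar> + 1"
  have B: "B > 0" "\<bar>f x\<bar> < B" for x using B0[rule_format, of x] unfolding B_def by auto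
  define g where "g = (\<lambda>x. (f x + B) / (2 * B))"
  have gc: "continuous_on UNIV g" unfolding g_def using fc B by (intro continuous_intros) auto
  have g01: "0 \<le> g x \<and> g x \<le> 1" for x
    using B(1) B(2)[of x] unfolding g_def by (auto simp: field_simps abs_less_iff)
  have f_eq: "f = (\<lambda>x. (2 * B) * g x + (- B) * 1)"
    using B(1) unfolding g_def by (auto simp: field_simps)
  have "integral\<^sup>L riesz_measure f = (2 * B) * integral\<^sup>L riesz_measure g + (- B) * integral\<^sup>L riesz_measure (\<lambda>x. 1)"
    by (subst f_eq) (simp add: integrable_riesz_measure gc)
  also have "\<dots> = (2 * B) * L g + (- B) * L (\<lambda>x. 1)"
    using integral_riesz_measure_unit[OF gc g01] integral_riesz_measure_unit[of "\<lambda>x. 1"] by simp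
  also have "\<dots> = L (\<lambda>x. (2 * B) * g x + (- B) * 1)"
  proof -
    have "L (\<lambda>x. (2 * B) * g x + (- B) * 1) = L (\<lambda>x. (2 * B) * g x) + L (\<lambda>x. (- B) * 1)"
      by (rule add) (auto intro: continuous_intros gc)
    then show ?thesis using scale[OF gc, of "2 * B"] scale[of "\<lambda>x. 1" "- B"] by simp
  qed
  finally show ?thesis using f_eq by simp
qed

theorem riesz_representation:
  "\<exists>M. regular_fin_borel M \<and> (\<forall>f. continuous_on UNIV f \<longrightarrow> integral\<^sup>L M f = L f)"
  using regular_fin_borel_riesz_measure integral_riesz_measure by blast

end

section \<open>Regular Borel measures on a compact space\<close>

lemma field_le_epsilon_scaled:
  fixes x y c :: real
  assumes "c > 0" "\<And>e. e > 0 \<Longrightarrow> x \<le> y + c * e"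
  shows "x \<le> y"
proof (rule field_le_epsilon)
  fix e :: real assume "e > 0"
  then show "x \<le> y + e" using assms(2)[of "e / c"] assms(1) by simp
qed

locale compact_regular_measure =
  fixes M :: "'a::t2_space measure"
  assumes UNIV_compact: "compact (UNIV::'a set)" and regular: "regular_fin_borel M"
begin

lemma sets_eq: "sets M = sets borel" using regular unfolding regular_fin_borel_def by blast
lemma space_eq: "space M = UNIV" using sets_eq_imp_space_eq[OF sets_eq] by simp
lemma finite: "finite_measure M" using regular unfolding regular_fin_borel_def by blast
lemma emeasure_real: "emeasure M A = ennreal (measure M A)"
  using finite_measure.emeasure_eq_measure[OF finite] .

lemma measure_mono: "A \<in> sets borel \<Longrightarrow> B \<in> sets borel \<Longrightarrow> A \<subseteq> B \<Longrightarrow> measure M A \<le> measure M B"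
  by (intro finite_measure.finite_measure_mono[OF finite]) (auto simp: sets_eq)

lemma integrable_continuous: "continuous_on UNIV f \<Longrightarrow> integrable M (f::'a \<Rightarrow> real)"
proof -
  assume gc: "continuous_on UNIV f"
  obtain B where B: "\<forall>x. \<bar>f x\<bar> \<le> B" using bounded_continuous_compact_UNIV[OF UNIV_compact gc] by blast
  have "f \<in> borel_measurable M"
    using borel_measurable_continuous_onI[OF gc] measurable_cong_sets[OF sets_eq refl] by blast
  then show ?thesis
    by (intro finite_measure.integrable_const_bound[OF finite, of _ B]) (use B in auto)
qed

lemma outer_regular_approx:
  assumes A: "A \<in> sets borel" and e: "e > 0"
  shows "\<exists>U. open U \<and> A \<subseteq> U \<and> measure M U < measure M A + e"
proof -
  have eq: "emeasure M A = (INF U\<in>{U. open U \<and> A \<subseteq> U}. emeasure M U)"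
    using regular A unfolding regular_fin_borel_def by blast
  have "emeasure M A < ennreal (measure M A + e)" using e by (simp add: emeasure_real ennreal_less_iff)
  then have "(INF U\<in>{U. open U \<and> A \<subseteq> U}. emeasure M U) < ennreal (measure M A + e)" using eq by simp
  then obtain U where U: "U \<in> {U. open U \<and> A \<subseteq> U}" "emeasure M U < ennreal (measure M A + e)"
    unfolding INF_less_iff by blast
  then have "measure M U < measure M A + e" by (simp add: emeasure_real ennreal_less_iff)
  then show ?thesis using U by blast
qed

lemma inner_regular_approx:
  assumes A: "A \<in> sets borel" and e: "e > 0"
  shows "\<exists>K. compact K \<and> K \<subseteq> A \<and> measure M A < measure M K + e"
proof (cases "measure M A < e")
  case True then show ?thesis by (intro exI[of _ "{}"]) simp
next
  case False
  have eq: "emeasure M A = (SUP K\<in>{K. compact K \<and> K \<subseteq> A}. emeasure M K)"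
    using regular A unfolding regular_fin_borel_def by blast
  have "ennreal (measure M A - e) < emeasure M A" using e False by (simp add: emeasure_real ennreal_less_iff)
  then have "ennreal (measure M A - e) < (SUP K\<in>{K. compact K \<and> K \<subseteq> A}. emeasure M K)" using eq by simp
  then obtain K where K: "K \<in> {K. compact K \<and> K \<subseteq> A}" "ennreal (measure M A - e) < emeasure M K"
    unfolding less_SUP_iff by blast
  then have "measure M A - e < measure M K" using False by (simp add: emeasure_real ennreal_less_iff)
  then show ?thesis using K by force
qed

lemma integral_le_measure:
  assumes fc: "continuous_on UNIV f" and f: "\<And>x. f x \<le> 1" and U: "U \<in> sets borel" "\<And>x. x \<notin> U \<Longrightarrow> f x \<le> 0"
  shows "integral\<^sup>L M f \<le> measure M U"
proof -
  have "integral\<^sup>L M f \<le> integral\<^sup>L M (indicator U :: 'a \<Rightarrow> real)"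
  proof (rule integral_mono)
    show "integrable M f" by (rule integrable_continuous[OF fc])
    show "integrable M (indicator U :: 'a \<Rightarrow> real)"
      using U(1) sets_eq finite by (intro finite_measure.integrable_const_bound[OF finite, of _ 1])
         (auto intro: borel_measurable_indicator simp: indicator_def)
    fix x show "f x \<le> indicator U x" using f[of x] U(2)[of x] by (auto simp: indicator_def)
  qed
  also have "\<dots> = measure M U" using Bochner_Integration.integral_indicator[of M U] space_eq by simp
  finally show ?thesis .
qed

lemma measure_le_integral:
  assumes fc: "continuous_on UNIV f" and f: "\<And>x. f x \<ge> 0" and K: "K \<in> sets borel" "\<And>x. x \<in> K \<Longrightarrow> f x \<ge> 1"
  shows "measure M K \<le> integral\<^sup>L M f"
proof -
  have "measure M K = integral\<^sup>L M (indicator K :: 'a \<Rightarrow> real)"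
    using Bochner_Integration.integral_indicator[of M K] space_eq by simp
  also have "\<dots> \<le> integral\<^sup>L M f"
  proof (rule integral_mono)
    show "integrable M f" by (rule integrable_continuous[OF fc])
    show "integrable M (indicator K :: 'a \<Rightarrow> real)"
      using K(1) sets_eq finite by (intro finite_measure.integrable_const_bound[OF finite, of _ 1])
         (auto intro: borel_measurable_indicator simp: indicator_def)
    fix x show "indicator K x \<le> f x" using f[of x] K(2)[of x] by (auto simp: indicator_def)
  qed
  finally show ?thesis .
qed

end

text \<open>A regular measure R whose integrals of continuous functions are those of a M + b N agrees
  with a M + b N on Borel sets: Urysohn functions squeeze compact sets between their open
  neighbourhoods, and inner regularity passes from compact to Borel sets.\<close>

locale integral_combination =
  R: compact_regular_measure R + M: compact_regular_measure M + N: compact_regular_measure N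
  for R M N :: "'a::t2_space measure" +
  fixes a b :: real
  assumes a: "a \<ge> 0" and b: "b \<ge> 0"
    and integral_eq: "\<And>f. continuous_on UNIV f \<Longrightarrow> integral\<^sup>L R f = a * integral\<^sup>L M f + b * integral\<^sup>L N f"
begin

lemma Urysohn_nbhd:
  fixes K :: "'a set"
  assumes "compact K" "open U" "K \<subseteq> U"
  shows "\<exists>f. continuous_on UNIV f \<and> (\<forall>x. 0 \<le> f x \<and> f x \<le> (1::real)) \<and> (\<forall>x\<in>K. f x = 1) \<and> (\<forall>x\<in>-U. f x = 0)"
  using Urysohn_compact_UNIV[OF R.UNIV_compact compact_imp_closed[OF assms(1)], of "-U"] assms(2,3)
  by auto

lemma measure_compact_le:
  assumes K: "compact K"
  shows "measure R K \<le> a * measure M K + b * measure N K"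
proof (rule field_le_epsilon_scaled[of "a + b + 1"])
  show "0 < a + b + 1" using a b by simp
  fix e :: real assume e: "e > 0"
  have Kb: "K \<in> sets borel" using K by (simp add: borel_compact)
  obtain U1 where U1: "open U1" "K \<subseteq> U1" "measure M U1 < measure M K + e"
    using M.outer_regular_approx[OF Kb e] by blast
  obtain U2 where U2: "open U2" "K \<subseteq> U2" "measure N U2 < measure N K + e"
    using N.outer_regular_approx[OF Kb e] by blast
  obtain f where f: "continuous_on UNIV f" "\<forall>x. 0 \<le> f x \<and> f x \<le> (1::real)" "\<forall>x\<in>K. f x = 1"
      "\<forall>x\<in>-(U1 \<inter> U2). f x = 0"
    using Urysohn_nbhd[OF K, of "U1 \<inter> U2"] U1 U2 by blast
  have "measure R K \<le> integral\<^sup>L R f" by (rule R.measure_le_integral[OF f(1) _ Kb]) (use f in auto)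
  also have "\<dots> = a * integral\<^sup>L M f + b * integral\<^sup>L N f" by (rule integral_eq[OF f(1)])
  also have "integral\<^sup>L M f \<le> measure M U1"
    by (rule M.integral_le_measure[OF f(1)]) (use f U1 in \<open>auto simp: borel_open\<close>)
  also have "integral\<^sup>L N f \<le> measure N U2"
    by (rule N.integral_le_measure[OF f(1)]) (use f U2 in \<open>auto simp: borel_open\<close>)
  finally have "measure R K \<le> a * measure M U1 + b * measure N U2"
    using a b by (simp add: add_mono mult_left_mono)
  also have "\<dots> \<le> a * (measure M K + e) + b * (measure N K + e)"
    using a b U1 U2 by (intro add_mono mult_left_mono) auto
  finally show "measure R K \<le> a * measure M K + b * measure N K + (a + b + 1) * e"
    using e by (simp add: algebra_simps)
qed

lemma measure_compact_ge:
  assumes K: "compact K"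
  shows "a * measure M K + b * measure N K \<le> measure R K"
proof (rule field_le_epsilon)
  fix e :: real assume e: "e > 0"
  have Kb: "K \<in> sets borel" using K by (simp add: borel_compact)
  obtain U where U: "open U" "K \<subseteq> U" "measure R U < measure R K + e"
    using R.outer_regular_approx[OF Kb e] by blast
  obtain f where f: "continuous_on UNIV f" "\<forall>x. 0 \<le> f x \<and> f x \<le> (1::real)" "\<forall>x\<in>K. f x = 1" "\<forall>x\<in>-U. f x = 0"
    using Urysohn_nbhd[OF K U(1,2)] by blast
  have "measure M K \<le> integral\<^sup>L M f" by (rule M.measure_le_integral[OF f(1) _ Kb]) (use f in auto)
  moreover have "measure N K \<le> integral\<^sup>L N f" by (rule N.measure_le_integral[OF f(1) _ Kb]) (use f in auto)
  ultimately have "a * measure M K + b * measure N K \<le> a * integral\<^sup>L M f + b * integral\<^sup>L N f"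
    using a b by (intro add_mono mult_left_mono) auto
  also have "\<dots> = integral\<^sup>L R f" by (rule integral_eq[OF f(1), symmetric])
  also have "\<dots> \<le> measure R U"
    by (rule R.integral_le_measure[OF f(1)]) (use f U in \<open>auto simp: borel_open\<close>)
  finally show "a * measure M K + b * measure N K \<le> measure R K + e" using U by simp
qed

lemma measure_compact_eq: "compact K \<Longrightarrow> measure R K = a * measure M K + b * measure N K"
  using measure_compact_le measure_compact_ge by (simp add: antisym)

lemma measure_le:
  assumes A: "A \<in> sets borel"
  shows "measure R A \<le> a * measure M A + b * measure N A"
proof (rule field_le_epsilon)
  fix e :: real assume e: "e > 0"
  obtain K where K: "compact K" "K \<subseteq> A" "measure R A < measure R K + e"
    using R.inner_regular_approx[OF A e] by blast
  have "measure R K = a * measure M K + b * measure N K" by (rule measure_compact_eq[OF K(1)])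
  also have "\<dots> \<le> a * measure M A + b * measure N A"
    using a b K A by (intro add_mono mult_left_mono M.measure_mono N.measure_mono) (auto simp: borel_compact)
  finally show "measure R A \<le> a * measure M A + b * measure N A + e" using K(3) by simp
qed

lemma measure_ge:
  assumes A: "A \<in> sets borel"
  shows "a * measure M A + b * measure N A \<le> measure R A"
proof (rule field_le_epsilon_scaled[of "a + b + 1"])
  show "0 < a + b + 1" using a b by simp
  fix e :: real assume e: "e > 0"
  obtain K1 where K1: "compact K1" "K1 \<subseteq> A" "measure M A < measure M K1 + e"
    using M.inner_regular_approx[OF A e] by blast
  obtain K2 where K2: "compact K2" "K2 \<subseteq> A" "measure N A < measure N K2 + e"
    using N.inner_regular_approx[OF A e] by blast
  have K: "compact (K1 \<union> K2)" "K1 \<union> K2 \<subseteq> A" using K1 K2 by auto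
  have "measure M K1 \<le> measure M (K1 \<union> K2)"
    using K1(1) K2(1) by (intro M.measure_mono) (auto simp: borel_compact)
  moreover have "measure N K2 \<le> measure N (K1 \<union> K2)"
    using K1(1) K2(1) by (intro N.measure_mono) (auto simp: borel_compact)
  ultimately have "a * measure M A + b * measure N A \<le>
      a * (measure M (K1 \<union> K2) + e) + b * (measure N (K1 \<union> K2) + e)"
    using a b K1 K2 by (intro add_mono mult_left_mono) auto
  also have "\<dots> = measure R (K1 \<union> K2) + (a + b) * e"
    using measure_compact_eq[OF K(1)] by (simp add: algebra_simps)
  also have "\<dots> \<le> measure R A + (a + b) * e" using K A by (simp add: R.measure_mono borel_compact)
  finally show "a * measure M A + b * measure N A \<le> measure R A + (a + b + 1) * e"
    using e by (simp add: algebra_simps)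
qed

lemma measure_eq: "A \<in> sets borel \<Longrightarrow> measure R A = a * measure M A + b * measure N A"
  using measure_le measure_ge by (simp add: antisym)

end

lemma regular_measure_lincomb:
  assumes cpt: "compact (UNIV::'a::t2_space set)"
    and M: "regular_fin_borel M" and N: "regular_fin_borel (N::'a measure)"
    and ab: "a \<ge> 0" "b \<ge> 0"
  shows "\<exists>R. regular_fin_borel R \<and> (\<forall>f. continuous_on UNIV f \<longrightarrow> integral\<^sup>L R f = a * integral\<^sup>L M f + b * integral\<^sup>L N f)
     \<and> (\<forall>A\<in>sets borel. measure R A = a * measure M A + b * measure N A)"
proof -
  interpret M: compact_regular_measure M using cpt M by unfold_locales
  interpret N: compact_regular_measure N using cpt N by unfold_locales
  interpret positive_functional "\<lambda>f. a * integral\<^sup>L M f + b * integral\<^sup>L N f"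
  proof
    show "compact (UNIV::'a set)" by (rule cpt)
    fix f g :: "'a \<Rightarrow> real" and c :: real
    assume fc: "continuous_on UNIV f"
    show "a * integral\<^sup>L M (\<lambda>x. c * f x) + b * integral\<^sup>L N (\<lambda>x. c * f x) = c * (a * integral\<^sup>L M f + b * integral\<^sup>L N f)"
      by (simp add: algebra_simps)
    assume gc: "continuous_on UNIV g"
    show "a * integral\<^sup>L M (\<lambda>x. f x + g x) + b * integral\<^sup>L N (\<lambda>x. f x + g x) =
          a * integral\<^sup>L M f + b * integral\<^sup>L N f + (a * integral\<^sup>L M g + b * integral\<^sup>L N g)"
      using M.integrable_continuous[OF fc] M.integrable_continuous[OF gc] N.integrable_continuous[OF fc] N.integrable_continuous[OF gc]
      by (simp add: Bochner_Integration.integral_add algebra_simps)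
  next
    fix f :: "'a \<Rightarrow> real" assume fc: "continuous_on UNIV f" and f0: "\<forall>x. 0 \<le> f x"
    have "0 \<le> integral\<^sup>L M f" "0 \<le> integral\<^sup>L N f" using f0 by (auto intro: Bochner_Integration.integral_nonneg)
    then show "0 \<le> a * integral\<^sup>L M f + b * integral\<^sup>L N f" using ab by simp
  qed
  obtain R where R: "regular_fin_borel R" "\<forall>f. continuous_on UNIV f \<longrightarrow> integral\<^sup>L R f = a * integral\<^sup>L M f + b * integral\<^sup>L N f"
    using riesz_representation by blast
  interpret integral_combination R M N a b
    using cpt R M N ab by unfold_locales auto
  show ?thesis using R measure_eq by blast
qed

lemma regular_fin_borel_null_measure: "regular_fin_borel (null_measure (borel::'a::topological_space measure))"
  unfolding regular_fin_borel_def
proof (intro conjI ballI)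
  show "sets (null_measure borel) = sets (borel::'a measure)" by simp
  show "finite_measure (null_measure (borel::'a measure))" by (rule finite_measureI) simp
  fix A :: "'a set" assume "A \<in> sets borel"
  have "{} \<in> {K. compact K \<and> K \<subseteq> A}" by simp
  then have "{K. compact K \<and> K \<subseteq> A} \<noteq> {}" by blast
  then show "emeasure (null_measure borel) A = (SUP K\<in>{K. compact K \<and> K \<subseteq> A}. emeasure (null_measure borel) K)"
    by simp
  have "{U. open U \<and> A \<subseteq> U} \<noteq> {}" by auto
  then show "emeasure (null_measure borel) A = (INF U\<in>{U. open U \<and> A \<subseteq> U}. emeasure (null_measure borel) U)"
    by simp
qed

section \<open>Jordan decomposition of bounded functionals\<close>

locale bounded_linear_functional =
  fixes L :: "('a::t2_space \<Rightarrow> real) \<Rightarrow> real"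
  assumes UNIV_compact: "compact (UNIV::'a set)"
    and add: "\<And>f g. continuous_on UNIV f \<Longrightarrow> continuous_on UNIV g \<Longrightarrow> L (\<lambda>x. f x + g x) = L f + L g"
    and scale: "\<And>f c. continuous_on UNIV f \<Longrightarrow> L (\<lambda>x. c * f x) = c * L f"
    and bounded: "\<And>f B. continuous_on UNIV f \<Longrightarrow> (\<forall>x. \<bar>f x\<bar> \<le> B) \<Longrightarrow> L f \<le> B"
begin

lemma zero: "L (\<lambda>x. 0) = 0"
  using scale[of "\<lambda>x. 0" 0] by simp

definition nonneg_minorants :: "('a \<Rightarrow> real) \<Rightarrow> real set" where
  "nonneg_minorants f = {L h | h. continuous_on UNIV h \<and> (\<forall>x. 0 \<le> h x \<and> h x \<le> f x)}"

definition positive_part :: "('a \<Rightarrow> real) \<Rightarrow> real" where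
  "positive_part f = Sup (nonneg_minorants f)"

lemma positive_part_upper:
  assumes "continuous_on UNIV f" "continuous_on UNIV h" "\<forall>x. 0 \<le> h x \<and> h x \<le> f x"
  shows "L h \<le> positive_part f"
  unfolding positive_part_def
proof (rule cSup_upper)
  show "L h \<in> nonneg_minorants f" unfolding nonneg_minorants_def using assms(2,3) by blast
  from bounded_continuous_compact_UNIV[OF UNIV_compact assms(1)]
  obtain B where B: "\<forall>x. \<bar>f x\<bar> \<le> B" ..
  have "y \<le> B" if y: "y \<in> nonneg_minorants f" for y
  proof -
    obtain h' where h': "y = L h'" "continuous_on UNIV h'" "\<forall>x. 0 \<le> h' x \<and> h' x \<le> f x"
      using y unfolding nonneg_minorants_def by blast
    have "\<forall>x. \<bar>h' x\<bar> \<le> B" using h'(3) B by (metis abs_of_nonneg abs_ge_self order_trans)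
    then show "y \<le> B" using bounded[OF h'(2)] h'(1) by simp
  qed
  then show "bdd_above (nonneg_minorants f)" unfolding bdd_above_def by blast
qed

lemma positive_part_least:
  assumes "\<forall>x. 0 \<le> f x"
    and "\<And>h. continuous_on UNIV h \<Longrightarrow> \<forall>x. 0 \<le> h x \<and> h x \<le> f x \<Longrightarrow> L h \<le> c"
  shows "positive_part f \<le> c"
  unfolding positive_part_def
proof (rule cSup_least)
  have "L (\<lambda>x. 0) \<in> nonneg_minorants f" unfolding nonneg_minorants_def using assms(1) by force
  then show "nonneg_minorants f \<noteq> {}" by blast
  show "y \<le> c" if "y \<in> nonneg_minorants f" for y
    using that assms(2) unfolding nonneg_minorants_def by blast
qed

lemma positive_part_ge: "continuous_on UNIV f \<Longrightarrow> \<forall>x. 0 \<le> f x \<Longrightarrow> L f \<le> positive_part f"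
  by (rule positive_part_upper) auto

lemma positive_part_nonneg: "continuous_on UNIV f \<Longrightarrow> \<forall>x. 0 \<le> f x \<Longrightarrow> 0 \<le> positive_part f"
  using positive_part_upper[of f "\<lambda>x. 0"] zero by simp

lemma positive_part_zero: "positive_part (\<lambda>x. 0) = 0"
proof (rule antisym)
  show "positive_part (\<lambda>x. 0) \<le> 0"
  proof (rule positive_part_least)
    fix h :: "'a \<Rightarrow> real" assume "\<forall>x. 0 \<le> h x \<and> h x \<le> 0"
    then have "h = (\<lambda>x. 0)" by (simp add: fun_eq_iff eq_iff)
    then show "L h \<le> 0" using zero by simp
  qed simp
  show "0 \<le> positive_part (\<lambda>x. 0)" by (rule positive_part_nonneg) auto
qed

lemma positive_part_add:
  assumes f: "continuous_on UNIV f" "\<forall>x. 0 \<le> f x" and g: "continuous_on UNIV g" "\<forall>x. 0 \<le> g x"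
  shows "positive_part (\<lambda>x. f x + g x) = positive_part f + positive_part g"
proof (rule antisym)
  have fg: "continuous_on UNIV (\<lambda>x. f x + g x)" "\<forall>x. 0 \<le> f x + g x"
    using f g by (auto intro: continuous_intros)
  show "positive_part (\<lambda>x. f x + g x) \<le> positive_part f + positive_part g"
  proof (rule positive_part_least[OF fg(2)])
    fix h assume hc: "continuous_on UNIV h" and h: "\<forall>x. 0 \<le> h x \<and> h x \<le> f x + g x"
    define h1 where "h1 = (\<lambda>x. min (h x) (f x))"
    have h1c: "continuous_on UNIV h1" unfolding h1_def using hc f by (intro continuous_intros)
    then have h2c: "continuous_on UNIV (\<lambda>x. h x - h1 x)" using hc by (intro continuous_intros)
    have "L h1 \<le> positive_part f"
      using h f unfolding h1_def by (intro positive_part_upper[OF f(1)] h1c[unfolded h1_def]) auto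
    moreover have "L (\<lambda>x. h x - h1 x) \<le> positive_part g"
    proof (rule positive_part_upper[OF g(1) h2c], intro allI)
      fix x show "0 \<le> h x - h1 x \<and> h x - h1 x \<le> g x"
        unfolding h1_def using h[rule_format, of x] f(2)[rule_format, of x] g(2)[rule_format, of x]
        by (auto simp: min_def)
    qed
    moreover have "L h = L h1 + L (\<lambda>x. h x - h1 x)" using add[OF h1c h2c] by simp
    ultimately show "L h \<le> positive_part f + positive_part g" by simp
  qed
  have "positive_part g \<le> positive_part (\<lambda>x. f x + g x) - positive_part f"
  proof (rule positive_part_least[OF g(2)])
    fix h2 assume h2c: "continuous_on UNIV h2" and h2: "\<forall>x. 0 \<le> h2 x \<and> h2 x \<le> g x"
    have "positive_part f \<le> positive_part (\<lambda>x. f x + g x) - L h2"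
    proof (rule positive_part_least[OF f(2)])
      fix h1 assume h1c: "continuous_on UNIV h1" and h1: "\<forall>x. 0 \<le> h1 x \<and> h1 x \<le> f x"
      have "\<forall>x. 0 \<le> h1 x + h2 x \<and> h1 x + h2 x \<le> f x + g x" using h1 h2 by (auto intro: add_mono)
      then have "L (\<lambda>x. h1 x + h2 x) \<le> positive_part (\<lambda>x. f x + g x)"
        by (intro positive_part_upper[OF fg(1)]) (auto intro: continuous_intros h1c h2c)
      then show "L h1 \<le> positive_part (\<lambda>x. f x + g x) - L h2" using add[OF h1c h2c] by simp
    qed
    then show "L h2 \<le> positive_part (\<lambda>x. f x + g x) - positive_part f" by simp
  qed
  then show "positive_part f + positive_part g \<le> positive_part (\<lambda>x. f x + g x)" by simp
qed

lemma positive_part_scale_le: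
  assumes f: "continuous_on UNIV f" "\<forall>x. 0 \<le> f x" and c: "c > 0"
  shows "positive_part (\<lambda>x. c * f x) \<le> c * positive_part f"
proof (rule positive_part_least)
  show "\<forall>x. 0 \<le> c * f x" using f(2) c by simp
  fix h assume hc: "continuous_on UNIV h" and h: "\<forall>x. 0 \<le> h x \<and> h x \<le> c * f x"
  have "\<forall>x. 0 \<le> (1/c) * h x \<and> (1/c) * h x \<le> f x" using h c by (auto simp: field_simps)
  moreover have "continuous_on UNIV (\<lambda>x. (1/c) * h x)" using hc by (intro continuous_intros)
  ultimately have "L (\<lambda>x. (1/c) * h x) \<le> positive_part f"
    using positive_part_upper[OF f(1)] by blast
  moreover have "L h = c * L (\<lambda>x. (1/c) * h x)" using scale[OF hc, of "1/c"] c by simp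
  ultimately show "L h \<le> c * positive_part f" using c by (simp add: mult_left_mono)
qed

lemma positive_part_scale:
  assumes f: "continuous_on UNIV f" "\<forall>x. 0 \<le> f x" and c: "c \<ge> 0"
  shows "positive_part (\<lambda>x. c * f x) = c * positive_part f"
proof (cases "c = 0")
  case True
  then show ?thesis using positive_part_zero by simp
next
  case False
  with c have c: "c > 0" by simp
  have cf: "continuous_on UNIV (\<lambda>x. c * f x)" "\<forall>x. 0 \<le> c * f x"
    using f c by (auto intro: continuous_intros)
  have "positive_part f = positive_part (\<lambda>x. (1/c) * (c * f x))" using c by simp
  also have "\<dots> \<le> (1/c) * positive_part (\<lambda>x. c * f x)"
    using c by (intro positive_part_scale_le cf) auto
  finally have "c * positive_part f \<le> positive_part (\<lambda>x. c * f x)" using c by (simp add: field_simps)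
  then show ?thesis using positive_part_scale_le[OF f c] by simp
qed

text \<open>The positive variation of L and its difference with L are the two positive functionals of
  the Jordan decomposition.\<close>

definition positive_variation :: "('a \<Rightarrow> real) \<Rightarrow> real" where
  "positive_variation f = positive_part (\<lambda>x. max (f x) 0) - positive_part (\<lambda>x. max (- f x) 0)"

lemma positive_variation_nonneg_eq:
  "continuous_on UNIV f \<Longrightarrow> \<forall>x. 0 \<le> f x \<Longrightarrow> positive_variation f = positive_part f"
  unfolding positive_variation_def using positive_part_zero
  by (simp add: max_absorb1 max_absorb2 le_minus_iff)

lemma positive_variation_add:
  assumes f: "continuous_on UNIV f" and g: "continuous_on UNIV g"
  shows "positive_variation (\<lambda>x. f x + g x) = positive_variation f + positive_variation g"
proof -
  have "(\<lambda>x. max (f x + g x) 0 + (max (- f x) 0 + max (- g x) 0)) =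
        (\<lambda>x. max (- (f x + g x)) 0 + (max (f x) 0 + max (g x) 0))"
    by (auto simp: fun_eq_iff max_def)
  then have "positive_part (\<lambda>x. max (f x + g x) 0 + (max (- f x) 0 + max (- g x) 0)) =
        positive_part (\<lambda>x. max (- (f x + g x)) 0 + (max (f x) 0 + max (g x) 0))"
    by simp
  then show ?thesis
    unfolding positive_variation_def using f g
    by (simp add: positive_part_add continuous_intros)
qed

lemma positive_variation_scale:
  assumes f: "continuous_on UNIV f"
  shows "positive_variation (\<lambda>x. c * f x) = c * positive_variation f"
proof -
  have pos: "continuous_on UNIV (\<lambda>x. max (f x) 0)" "\<forall>x. 0 \<le> max (f x) 0"
    and neg: "continuous_on UNIV (\<lambda>x. max (- f x) 0)" "\<forall>x. 0 \<le> max (- f x) 0"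
    using f by (auto intro: continuous_intros)
  show ?thesis
  proof (cases "c \<ge> 0")
    case True
    have "(\<lambda>x. max (c * f x) 0) = (\<lambda>x. c * max (f x) 0)"
      "(\<lambda>x. max (- (c * f x)) 0) = (\<lambda>x. c * max (- f x) 0)"
      using True by (auto simp: fun_eq_iff max_def mult_le_0_iff zero_le_mult_iff)
    note eqs = this
    show ?thesis
      unfolding positive_variation_def eqs positive_part_scale[OF pos True] positive_part_scale[OF neg True]
      by (simp add: right_diff_distrib)
  next
    case False
    then have c: "- c \<ge> 0" by simp
    have "(\<lambda>x. max (c * f x) 0) = (\<lambda>x. (- c) * max (- f x) 0)"
      "(\<lambda>x. max (- (c * f x)) 0) = (\<lambda>x. (- c) * max (f x) 0)"
      using False by (auto simp: fun_eq_iff max_def mult_le_0_iff zero_le_mult_iff)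
    note eqs = this
    show ?thesis
      unfolding positive_variation_def eqs positive_part_scale[OF pos c] positive_part_scale[OF neg c]
      by (simp add: algebra_simps)
  qed
qed

theorem jordan_decomposition:
  "\<exists>L1 L2. positive_functional L1 \<and> positive_functional L2 \<and> (\<forall>f. continuous_on UNIV f \<longrightarrow> L f = L1 f - L2 f)"
proof (intro exI conjI)
  show "positive_functional positive_variation"
    by unfold_locales
      (auto simp: UNIV_compact positive_variation_add positive_variation_scale positive_variation_nonneg_eq
        positive_part_nonneg)
  show "positive_functional (\<lambda>f. positive_variation f - L f)"
    by unfold_locales
      (auto simp: UNIV_compact positive_variation_add positive_variation_scale positive_variation_nonneg_eq
        positive_part_ge add scale algebra_simps)
  show "\<forall>f. continuous_on UNIV f \<longrightarrow> L f = positive_variation f - (positive_variation f - L f)"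
    by simp
qed

end

section \<open>The weak-star closure of a thermodynamical theory\<close>

lemma integrable_continuous_rsm:
  fixes f :: "'a::t2_space \<Rightarrow> real"
  assumes "compact (UNIV::'a set)" "rsm \<mu>" "continuous_on UNIV f"
  shows "integrable (fst \<mu>) f" "integrable (snd \<mu>) f"
  using assms compact_regular_measure.integrable_continuous
  unfolding rsm_def compact_regular_measure_def by blast+

lemma sint_add:
  fixes f g :: "'a::t2_space \<Rightarrow> real"
  assumes "compact (UNIV::'a set)" "rsm \<mu>" "continuous_on UNIV f" "continuous_on UNIV g"
  shows "sint \<mu> (\<lambda>x. f x + g x) = sint \<mu> f + sint \<mu> g"
  using integrable_continuous_rsm[OF assms(1,2,3)] integrable_continuous_rsm[OF assms(1,2,4)]
  unfolding sint_def by simp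

lemma sint_scale: "sint \<mu> (\<lambda>x. c * f x) = c * sint \<mu> f"
  unfolding sint_def by (simp add: right_diff_distrib)

lemma sint_sum:
  fixes F :: "('a::t2_space \<Rightarrow> real) set"
  assumes cpt: "compact (UNIV::'a set)" and \<mu>: "rsm \<mu>"
    and F: "finite F" and Fc: "\<And>f. f \<in> F \<Longrightarrow> continuous_on UNIV f"
  shows "sint \<mu> (\<lambda>x. \<Sum>f\<in>F. a f * f x) = (\<Sum>f\<in>F. a f * sint \<mu> f)"
  using F Fc
proof (induction F rule: finite_induct)
  case empty
  then show ?case by (simp add: sint_def)
next
  case (insert h F)
  have "sint \<mu> (\<lambda>x. a h * h x + (\<Sum>f\<in>F. a f * f x)) = sint \<mu> (\<lambda>x. a h * h x) + sint \<mu> (\<lambda>x. \<Sum>f\<in>F. a f * f x)"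
    by (rule sint_add[OF cpt \<mu>]) (use insert.prems in \<open>auto intro!: continuous_intros\<close>)
  then show ?case using insert by (simp add: sint_scale)
qed

lemma rsm_lincomb:
  assumes cpt: "compact (UNIV::'a::t2_space set)" and \<mu>: "rsm (\<mu>::'a sm)" and \<mu>': "rsm \<mu>'"
    and ab: "a \<ge> 0" "b \<ge> 0"
  shows "\<exists>\<nu>. rsm \<nu> \<and> (\<forall>f. continuous_on UNIV f \<longrightarrow> sint \<nu> f = a * sint \<mu> f + b * sint \<mu>' f) \<and>
           (\<forall>A\<in>sets borel. sval \<nu> A = a * sval \<mu> A + b * sval \<mu>' A)"
proof -
  obtain R1 where R1: "regular_fin_borel R1"
    "\<forall>f. continuous_on UNIV f \<longrightarrow> integral\<^sup>L R1 f = a * integral\<^sup>L (fst \<mu>) f + b * integral\<^sup>L (fst \<mu>') f"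
    "\<forall>A\<in>sets borel. measure R1 A = a * measure (fst \<mu>) A + b * measure (fst \<mu>') A"
    using regular_measure_lincomb[OF cpt _ _ ab] \<mu> \<mu>' unfolding rsm_def by blast
  obtain R2 where R2: "regular_fin_borel R2"
    "\<forall>f. continuous_on UNIV f \<longrightarrow> integral\<^sup>L R2 f = a * integral\<^sup>L (snd \<mu>) f + b * integral\<^sup>L (snd \<mu>') f"
    "\<forall>A\<in>sets borel. measure R2 A = a * measure (snd \<mu>) A + b * measure (snd \<mu>') A"
    using regular_measure_lincomb[OF cpt _ _ ab] \<mu> \<mu>' unfolding rsm_def by blast
  show ?thesis
    using R1 R2 by (intro exI[of _ "(R1, R2)"]) (simp add: rsm_def sint_def sval_def algebra_simps)
qed

lemma inV_lincomb:
  assumes cpt: "compact (UNIV::'a::t2_space set)" and y: "inV (y::'a vp)" and y': "inV y'"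
    and ab: "a \<ge> 0" "b \<ge> 0"
  shows "\<exists>z. inV z \<and> (\<forall>f. continuous_on UNIV f \<longrightarrow>
            sint (fst z) f = a * sint (fst y) f + b * sint (fst y') f \<and>
            sint (snd z) f = a * sint (snd y) f + b * sint (snd y') f) \<and>
          (\<forall>A\<in>sets borel. sval (fst z) A = a * sval (fst y) A + b * sval (fst y') A \<and>
            sval (snd z) A = a * sval (snd y) A + b * sval (snd y') A)"
proof -
  obtain \<nu>1 where \<nu>1: "rsm \<nu>1" "\<forall>f. continuous_on UNIV f \<longrightarrow> sint \<nu>1 f = a * sint (fst y) f + b * sint (fst y') f"
    "\<forall>A\<in>sets borel. sval \<nu>1 A = a * sval (fst y) A + b * sval (fst y') A"
    using rsm_lincomb[OF cpt _ _ ab] y y' unfolding inV_def by blast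
  obtain \<nu>2 where \<nu>2: "rsm \<nu>2" "\<forall>f. continuous_on UNIV f \<longrightarrow> sint \<nu>2 f = a * sint (snd y) f + b * sint (snd y') f"
    "\<forall>A\<in>sets borel. sval \<nu>2 A = a * sval (snd y) A + b * sval (snd y') A"
    using rsm_lincomb[OF cpt _ _ ab] y y' unfolding inV_def by blast
  have "sval \<nu>1 UNIV = 0" using \<nu>1(3) y y' unfolding inV_def by simp
  then show ?thesis using \<nu>1 \<nu>2 by (intro exI[of _ "(\<nu>1, \<nu>2)"]) (simp add: inV_def)
qed

lemma rsm_of_thermo_theory:
  assumes "thermo_theory P" "p \<in> P"
  shows "rsm (fst p)" "rsm (snd p)"
  using assms unfolding thermo_theory_def inV_def by blast+

lemma signed_measure_of_bounded_functional:
  assumes "bounded_linear_functional L"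
  shows "\<exists>x. inV x \<and> (\<forall>A\<in>sets borel. sval (fst x) A = 0) \<and>
           (\<forall>f. continuous_on UNIV f \<longrightarrow> sint (fst x) f = 0 \<and> sint (snd x) f = - L f)"
proof -
  obtain L1 L2 where J: "positive_functional L1" "positive_functional L2"
    "\<forall>f. continuous_on UNIV f \<longrightarrow> L f = L1 f - L2 f"
    using bounded_linear_functional.jordan_decomposition[OF assms] by blast
  obtain M1 where M1: "regular_fin_borel M1" "\<forall>f. continuous_on UNIV f \<longrightarrow> integral\<^sup>L M1 f = L1 f"
    using positive_functional.riesz_representation[OF J(1)] by blast
  obtain M2 where M2: "regular_fin_borel M2" "\<forall>f. continuous_on UNIV f \<longrightarrow> integral\<^sup>L M2 f = L2 f"
    using positive_functional.riesz_representation[OF J(2)] by blast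
  show ?thesis
    using regular_fin_borel_null_measure M1 M2 J(3)
    by (intro exI[of _ "((null_measure borel, null_measure borel), (M2, M1))"])
       (simp add: inV_def rsm_def sval_def sint_def)
qed

lemma in_hat_of_mem:
  assumes "thermo_theory P" "p \<in> P"
  shows "in_hat P p"
  unfolding in_hat_def
proof (intro conjI allI impI)
  show "inV p" using assms unfolding thermo_theory_def by blast
  fix F :: "('a \<Rightarrow> real) set" and e :: real assume "e > 0"
  then show "\<exists>c\<ge>0. \<exists>q\<in>P. \<forall>f\<in>F. \<bar>c * sint (fst q) f - sint (fst p) f\<bar> < e \<and> \<bar>c * sint (snd q) f - sint (snd p) f\<bar> < e"
    using assms(2) by (intro exI[of _ 1] conjI bexI[of _ p]) auto
qed

lemma in_hat_scale:
  assumes hy: "in_hat P y" and z: "inV z" and c: "c \<ge> 0"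
    and I: "\<And>f. continuous_on UNIV f \<Longrightarrow> sint (fst z) f = c * sint (fst y) f \<and> sint (snd z) f = c * sint (snd y) f"
  shows "in_hat P z"
  unfolding in_hat_def
proof (intro conjI allI impI)
  show "inV z" by (rule z)
  fix F :: "('a \<Rightarrow> real) set" and e :: real
  assume F: "finite F" and Fc: "\<forall>f\<in>F. continuous_on UNIV f" and e: "e > 0"
  show "\<exists>c'\<ge>0. \<exists>p\<in>P. \<forall>f\<in>F. \<bar>c' * sint (fst p) f - sint (fst z) f\<bar> < e \<and> \<bar>c' * sint (snd p) f - sint (snd z) f\<bar> < e"
  proof (cases "c = 0")
    case True
    obtain p where "p \<in> P" using hy unfolding in_hat_def
      by (metis (no_types, lifting) empty_iff finite.emptyI zero_less_one)
    then show ?thesis using True I Fc e by (intro exI[of _ 0] conjI bexI[of _ p]) auto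
  next
    case False
    then have c0: "c > 0" using c by simp
    obtain c' p where cp: "c' \<ge> 0" "p \<in> P" "\<forall>f\<in>F. \<bar>c' * sint (fst p) f - sint (fst y) f\<bar> < e / c \<and> \<bar>c' * sint (snd p) f - sint (snd y) f\<bar> < e / c"
    proof -
      have hy': "\<forall>F e. finite F \<longrightarrow> (\<forall>f\<in>F. continuous_on UNIV f) \<longrightarrow> e > 0 \<longrightarrow>
        (\<exists>c::real. c \<ge> 0 \<and> (\<exists>p\<in>P. \<forall>f\<in>F. \<bar>c * sint (fst p) f - sint (fst y) f\<bar> < e \<and>
            \<bar>c * sint (snd p) f - sint (snd y) f\<bar> < e))" using hy unfolding in_hat_def by blast
      have "e / c > 0" using e c0 by simp
      from hy'[rule_format, OF F Fc[rule_format] this] show ?thesis using that by blast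
    qed
    have "\<forall>f\<in>F. \<bar>(c * c') * sint (fst p) f - sint (fst z) f\<bar> < e \<and> \<bar>(c * c') * sint (snd p) f - sint (snd z) f\<bar> < e"
    proof
      fix f assume f: "f \<in> F"
      have a: "\<bar>(c * c') * sint (fst p) f - sint (fst z) f\<bar> = c * \<bar>c' * sint (fst p) f - sint (fst y) f\<bar>"
        using I[of f] Fc f c0 by (simp add: abs_mult right_diff_distrib[symmetric] mult.assoc)
      have b: "\<bar>(c * c') * sint (snd p) f - sint (snd z) f\<bar> = c * \<bar>c' * sint (snd p) f - sint (snd y) f\<bar>"
        using I[of f] Fc f c0 by (simp add: abs_mult right_diff_distrib[symmetric] mult.assoc)
      show "\<bar>(c * c') * sint (fst p) f - sint (fst z) f\<bar> < e \<and> \<bar>(c * c') * sint (snd p) f - sint (snd z) f\<bar> < e"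
        unfolding a b using cp(3) f c0 by (simp add: field_simps)
    qed
    then show ?thesis using cp c0 by (intro exI[of _ "c * c'"]) auto
  qed
qed

lemma in_hat_convex:
  assumes "thermo_theory P" "in_hat P x" "in_hat P y" "inV z" "0 \<le> t" "t \<le> 1"
    "\<forall>A\<in>sets borel. sval (fst z) A = t * sval (fst x) A + (1 - t) * sval (fst y) A \<and>
       sval (snd z) A = t * sval (snd x) A + (1 - t) * sval (snd y) A"
  shows "in_hat P z"
  using assms unfolding thermo_theory_def by blast

lemma in_hat_add:
  assumes cpt: "compact (UNIV::'a::t2_space set)" and th: "thermo_theory (P::'a vp set)"
    and h1: "in_hat P y1" and h2: "in_hat P y2"
  shows "\<exists>z. in_hat P z \<and> (\<forall>f. continuous_on UNIV f \<longrightarrow>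
     sint (fst z) f = sint (fst y1) f + sint (fst y2) f \<and> sint (snd z) f = sint (snd y1) f + sint (snd y2) f)"
proof -
  have v1: "inV y1" and v2: "inV y2" using h1 h2 unfolding in_hat_def by auto
  obtain x1 where x1: "inV x1" "\<forall>f. continuous_on UNIV f \<longrightarrow>
            sint (fst x1) f = 2 * sint (fst y1) f + 0 * sint (fst y1) f \<and>
            sint (snd x1) f = 2 * sint (snd y1) f + 0 * sint (snd y1) f"
     "\<forall>A\<in>sets borel. sval (fst x1) A = 2 * sval (fst y1) A + 0 * sval (fst y1) A \<and>
            sval (snd x1) A = 2 * sval (snd y1) A + 0 * sval (snd y1) A"
    using inV_lincomb[OF cpt v1 v1, of 2 0] by auto
  obtain x2 where x2: "inV x2" "\<forall>f. continuous_on UNIV f \<longrightarrow>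
            sint (fst x2) f = 2 * sint (fst y2) f + 0 * sint (fst y2) f \<and>
            sint (snd x2) f = 2 * sint (snd y2) f + 0 * sint (snd y2) f"
     "\<forall>A\<in>sets borel. sval (fst x2) A = 2 * sval (fst y2) A + 0 * sval (fst y2) A \<and>
            sval (snd x2) A = 2 * sval (snd y2) A + 0 * sval (snd y2) A"
    using inV_lincomb[OF cpt v2 v2, of 2 0] by auto
  obtain z where z: "inV z" "\<forall>f. continuous_on UNIV f \<longrightarrow>
            sint (fst z) f = 1 * sint (fst y1) f + 1 * sint (fst y2) f \<and>
            sint (snd z) f = 1 * sint (snd y1) f + 1 * sint (snd y2) f"
     "\<forall>A\<in>sets borel. sval (fst z) A = 1 * sval (fst y1) A + 1 * sval (fst y2) A \<and>
            sval (snd z) A = 1 * sval (snd y1) A + 1 * sval (snd y2) A"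
    using inV_lincomb[OF cpt v1 v2, of 1 1] by auto
  have hx1: "in_hat P x1" by (rule in_hat_scale[OF h1 x1(1), of 2]) (use x1(2) in auto)
  have hx2: "in_hat P x2" by (rule in_hat_scale[OF h2 x2(1), of 2]) (use x2(2) in auto)
  have sv: "\<forall>A\<in>sets borel. sval (fst z) A = (1/2) * sval (fst x1) A + (1 - 1/2) * sval (fst x2) A
                      \<and> sval (snd z) A = (1/2) * sval (snd x1) A + (1 - 1/2) * sval (snd x2) A"
    using z(3) x1(3) x2(3) by simp
  have "in_hat P z" by (rule in_hat_convex[OF th hx1 hx2 z(1), of "1/2"]) (use sv in simp_all)
  then show ?thesis using z(2) by (intro exI[of _ z] conjI) simp_all
qed


text \<open>The finitely many weak-star coordinates of y singled out by the continuous functions in F: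
  index (f, True) reads the first component of y against f, index (f, False) the second.\<close>

definition hat_coords :: "('a::topological_space \<Rightarrow> real) set \<Rightarrow> 'a vp \<Rightarrow> ('a \<Rightarrow> real) \<times> bool \<Rightarrow> real" where
  "hat_coords F y i = (if fst i \<in> F then (if snd i then sint (fst y) (fst i) else sint (snd y) (fst i)) else 0)"

lemma convex_cone_hat_coords:
  fixes P :: "('a::t2_space) vp set"
  assumes cpt: "compact (UNIV::'a set)" and th: "thermo_theory P" and ne: "\<exists>x. in_hat P x"
    and Fc: "\<forall>f\<in>F. continuous_on UNIV f"
  shows "function_convex_cone {hat_coords F y | y. in_hat P y}"
  unfolding function_convex_cone_def
proof (intro conjI ballI allI impI)
  have inV: "inV y" if "in_hat P y" for y using that unfolding in_hat_def by blast
  obtain x1 where x1: "in_hat P x1" using ne by blast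
  obtain z where z: "inV z" "\<forall>f. continuous_on UNIV f \<longrightarrow>
      sint (fst z) f = 0 * sint (fst x1) f + 0 * sint (fst x1) f \<and>
      sint (snd z) f = 0 * sint (snd x1) f + 0 * sint (snd x1) f"
    using inV_lincomb[OF cpt inV[OF x1] inV[OF x1], of 0 0] by auto
  have "in_hat P z" by (rule in_hat_scale[OF x1 z(1), of 0]) (use z(2) in auto)
  moreover have "hat_coords F z = (\<lambda>i. 0)" unfolding hat_coords_def using z(2) Fc by (auto simp: fun_eq_iff)
  ultimately show "(\<lambda>i. 0) \<in> {hat_coords F y | y. in_hat P y}"
    by (intro CollectI exI[of _ z] conjI) simp_all
next
  fix w1 w2 assume "w1 \<in> {hat_coords F y | y. in_hat P y}" "w2 \<in> {hat_coords F y | y. in_hat P y}"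
  then obtain y1 y2 where y: "w1 = hat_coords F y1" "in_hat P y1" "w2 = hat_coords F y2" "in_hat P y2"
    by blast
  obtain z where z: "in_hat P z" "\<forall>f. continuous_on UNIV f \<longrightarrow>
      sint (fst z) f = sint (fst y1) f + sint (fst y2) f \<and> sint (snd z) f = sint (snd y1) f + sint (snd y2) f"
    using in_hat_add[OF cpt th y(2,4)] by blast
  have "hat_coords F z = (\<lambda>i. w1 i + w2 i)" unfolding y hat_coords_def using z(2) Fc by (auto simp: fun_eq_iff)
  then show "(\<lambda>i. w1 i + w2 i) \<in> {hat_coords F y | y. in_hat P y}"
    using z(1) by (intro CollectI exI[of _ z] conjI) simp_all
next
  fix w and c :: real assume "w \<in> {hat_coords F y | y. in_hat P y}" "0 \<le> c"
  then obtain y where y: "w = hat_coords F y" "in_hat P y" and c: "c \<ge> 0" by blast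
  then have "inV y" unfolding in_hat_def by blast
  then obtain z where z: "inV z" "\<forall>f. continuous_on UNIV f \<longrightarrow>
      sint (fst z) f = c * sint (fst y) f + 0 * sint (fst y) f \<and>
      sint (snd z) f = c * sint (snd y) f + 0 * sint (snd y) f"
    using inV_lincomb[OF cpt _ _ c, of y y 0] by auto
  have "in_hat P z" by (rule in_hat_scale[OF y(2) z(1) c]) (use z(2) in auto)
  moreover have "hat_coords F z = (\<lambda>i. c * w i)" unfolding y hat_coords_def using z(2) Fc by (auto simp: fun_eq_iff)
  ultimately show "(\<lambda>i. c * w i) \<in> {hat_coords F y | y. in_hat P y}"
    by (intro CollectI exI[of _ z] conjI) simp_all
qed

lemma hat_coords_near_imp_near:
  assumes y: "in_hat P y" and F: "finite F" "\<forall>f\<in>F. continuous_on UNIV f" and e: "e > 0"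
    and near: "\<And>i. \<bar>hat_coords F x i - hat_coords F y i\<bar> \<le> e / 2"
  shows "\<exists>c\<ge>0. \<exists>p\<in>P. \<forall>f\<in>F. \<bar>c * sint (fst p) f - sint (fst x) f\<bar> < e \<and>
           \<bar>c * sint (snd p) f - sint (snd x) f\<bar> < e"
proof -
  have "\<forall>F e. finite F \<longrightarrow> (\<forall>f\<in>F. continuous_on UNIV f) \<longrightarrow> e > 0 \<longrightarrow>
      (\<exists>c\<ge>0. \<exists>p\<in>P. \<forall>f\<in>F. \<bar>c * sint (fst p) f - sint (fst y) f\<bar> < e \<and>
         \<bar>c * sint (snd p) f - sint (snd y) f\<bar> < e)"
    using y unfolding in_hat_def by blast
  moreover have "e / 2 > 0" using e by simp
  ultimately obtain c p where cp: "c \<ge> 0" "p \<in> P" "\<forall>f\<in>F. \<bar>c * sint (fst p) f - sint (fst y) f\<bar> < e / 2 \<and>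
      \<bar>c * sint (snd p) f - sint (snd y) f\<bar> < e / 2"
    using F by blast
  have "\<bar>c * sint (fst p) f - sint (fst x) f\<bar> < e \<and> \<bar>c * sint (snd p) f - sint (snd x) f\<bar> < e"
    if f: "f \<in> F" for f
  proof -
    have "\<bar>sint (fst x) f - sint (fst y) f\<bar> \<le> e / 2" "\<bar>sint (snd x) f - sint (snd y) f\<bar> \<le> e / 2"
      using near[of "(f, True)"] near[of "(f, False)"] f by (simp_all add: hat_coords_def)
    moreover have "\<bar>c * sint (fst p) f - sint (fst y) f\<bar> < e / 2" "\<bar>c * sint (snd p) f - sint (snd y) f\<bar> < e / 2"
      using cp(3) f by auto
    ultimately show ?thesis by linarith
  qed
  then show ?thesis using cp(1,2) by blast
qed

lemma separation_of_hat_coords: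
  fixes P :: "('a::t2_space) vp set"
  assumes cpt: "compact (UNIV::'a set)" and th: "thermo_theory P" and ne: "\<exists>x. in_hat P x"
    and F: "finite F" "\<forall>f\<in>F. continuous_on UNIV f" and e: "e > 0"
    and not_near: "\<not> (\<exists>c\<ge>0. \<exists>p\<in>P. \<forall>f\<in>F. \<bar>c * sint (fst p) f - sint (fst x0) f\<bar> < e \<and>
            \<bar>c * sint (snd p) f - sint (snd x0) f\<bar> < e)"
  shows "\<exists>L. linear_on {v. \<forall>i. i \<notin> F \<times> UNIV \<longrightarrow> v i = 0} L \<and>
           (\<forall>y. in_hat P y \<longrightarrow> L (hat_coords F y) \<le> 0) \<and> e / 2 \<le> L (hat_coords F x0)"
proof -
  define W where "W = {v :: ('a \<Rightarrow> real) \<times> bool \<Rightarrow> real. \<forall>i. i \<notin> F \<times> UNIV \<longrightarrow> v i = 0}"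
  have W: "function_subspace W" unfolding function_subspace_def W_def by auto
  have W_bounded: "\<exists>B. \<forall>i. \<bar>v i\<bar> \<le> B" if "v \<in> W" for v
  proof (intro exI allI)
    fix i show "\<bar>v i\<bar> \<le> (\<Sum>j\<in>F \<times> UNIV. \<bar>v j\<bar>)"
    proof (cases "i \<in> F \<times> UNIV")
      case True
      then show ?thesis using F(1) by (intro member_le_sum) auto
    next
      case False
      then have "v i = 0" using that unfolding W_def by blast
      then show ?thesis by (simp add: sum_nonneg)
    qed
  qed
  have coords_W: "hat_coords F y \<in> W" for y unfolding W_def hat_coords_def by auto
  have far: "\<exists>i. e / 2 < \<bar>hat_coords F x0 i - w i\<bar>" if w: "w \<in> {hat_coords F y | y. in_hat P y}" for w
  proof (rule ccontr)
    assume "\<not> ?thesis"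
    then have near: "\<bar>hat_coords F x0 i - w i\<bar> \<le> e / 2" for i by (meson not_less)
    obtain y where y: "w = hat_coords F y" "in_hat P y" using w by blast
    then show False using hat_coords_near_imp_near[OF y(2) F e, where x = x0] near not_near by blast
  qed
  have "{hat_coords F y | y. in_hat P y} \<subseteq> W" using coords_W by blast
  from separation_from_convex_cone[OF W W_bounded convex_cone_hat_coords[OF cpt th ne F(2)]
      this coords_W far]
  show ?thesis unfolding W_def by blast
qed

lemma linear_functional_hat_coords:
  fixes F :: "('a::t2_space \<Rightarrow> real) set"
  assumes cpt: "compact (UNIV::'a set)" and F: "finite F" "\<forall>f\<in>F. continuous_on UNIV f"
    and L: "linear_on {v. \<forall>i. i \<notin> F \<times> UNIV \<longrightarrow> v i = 0} L" and y: "inV y"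
  shows "L (hat_coords F y) =
    sint (fst y) (\<lambda>x. \<Sum>f\<in>F. L (\<lambda>j. if j = (f, True) then 1 else 0) * f x) +
    sint (snd y) (\<lambda>x. \<Sum>f\<in>F. L (\<lambda>j. if j = (f, False) then 1 else 0) * f x)"
proof -
  have "L (hat_coords F y) = (\<Sum>i\<in>F \<times> UNIV. hat_coords F y i * L (\<lambda>j. if j = i then 1 else 0))"
    using linear_on_finitely_supported[OF _ L] F(1) by (simp add: hat_coords_def)
  also have "\<dots> = (\<Sum>f\<in>F. \<Sum>b\<in>UNIV. hat_coords F y (f, b) * L (\<lambda>j. if j = (f, b) then 1 else 0))"
    by (simp add: sum.cartesian_product)
  also have "\<dots> = (\<Sum>f\<in>F. L (\<lambda>j. if j = (f, True) then 1 else 0) * sint (fst y) f +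
      L (\<lambda>j. if j = (f, False) then 1 else 0) * sint (snd y) f)"
    by (rule sum.cong) (auto simp: UNIV_bool hat_coords_def)
  also have "\<dots> = sint (fst y) (\<lambda>x. \<Sum>f\<in>F. L (\<lambda>j. if j = (f, True) then 1 else 0) * f x) +
      sint (snd y) (\<lambda>x. \<Sum>f\<in>F. L (\<lambda>j. if j = (f, False) then 1 else 0) * f x)"
    using y F unfolding inV_def by (simp add: sint_sum[OF cpt] sum.distrib)
  finally show ?thesis .
qed

text \<open>A bipolar theorem for hat P.  If x0 were not in hat P, finitely many coordinates would
  separate it from hat P, and the separating functional on these coordinates is an inequality
  valid on P but violated at x0.\<close>

theorem in_hat_of_inequalities:
  fixes P :: "('a::t2_space) vp set"
  assumes cpt: "compact (UNIV::'a set)" and th: "thermo_theory P"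
    and ne: "\<exists>x. in_hat P x" and x0: "inV x0"
    and ineq: "\<And>\<eta> g. continuous_on UNIV \<eta> \<Longrightarrow> continuous_on UNIV g \<Longrightarrow>
       (\<forall>p\<in>P. sint (fst p) \<eta> + sint (snd p) g \<le> 0) \<Longrightarrow> sint (fst x0) \<eta> + sint (snd x0) g \<le> 0"
  shows "in_hat P x0"
proof (rule ccontr)
  assume "\<not> in_hat P x0"
  then obtain F e where F: "finite F" "\<forall>f\<in>F. continuous_on UNIV f" and e: "e > (0::real)"
    and not_near: "\<not> (\<exists>c\<ge>0. \<exists>p\<in>P. \<forall>f\<in>F. \<bar>c * sint (fst p) f - sint (fst x0) f\<bar> < e \<and>
            \<bar>c * sint (snd p) f - sint (snd x0) f\<bar> < e)"
    using x0 unfolding in_hat_def by blast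
  obtain L where L: "linear_on {v. \<forall>i. i \<notin> F \<times> UNIV \<longrightarrow> v i = 0} L"
    "\<And>y. in_hat P y \<Longrightarrow> L (hat_coords F y) \<le> 0" "e / 2 \<le> L (hat_coords F x0)"
    using separation_of_hat_coords[OF cpt th ne F e not_near] by blast
  define \<eta> where "\<eta> = (\<lambda>x. \<Sum>f\<in>F. L (\<lambda>j. if j = (f, True) then 1 else 0) * f x)"
  define g where "g = (\<lambda>x. \<Sum>f\<in>F. L (\<lambda>j. if j = (f, False) then 1 else 0) * f x)"
  have \<eta>c: "continuous_on UNIV \<eta>" and gc: "continuous_on UNIV g"
    unfolding \<eta>_def g_def using F(2) by (auto intro!: continuous_intros)
  note L_coords = linear_functional_hat_coords[OF cpt F L(1), folded \<eta>_def g_def]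
  have "sint (fst p) \<eta> + sint (snd p) g \<le> 0" if "p \<in> P" for p
  proof -
    have p: "in_hat P p" by (rule in_hat_of_mem[OF th that])
    then have "inV p" unfolding in_hat_def by blast
    then show ?thesis using L(2)[OF p] L_coords by simp
  qed
  then have "sint (fst x0) \<eta> + sint (snd x0) g \<le> 0" using ineq[OF \<eta>c gc] by blast
  then show False using L(3) L_coords[OF x0] e by simp
qed

section \<open>Approximation of strong Clausius scales\<close>

text \<open>A Clausius-Duhem scale T is exactly one for which -1/T belongs to this cone.\<close>

definition clausius_duhem_cone :: "('a::topological_space) vp set \<Rightarrow> ('a \<Rightarrow> real) set" where
  "clausius_duhem_cone P = {g. continuous_on UNIV g \<and>
     (\<exists>\<eta>. continuous_on UNIV \<eta> \<and> (\<forall>p\<in>P. 0 \<le> sint (fst p) \<eta> + sint (snd p) g))}"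

lemma clausius_duhem_of_cone:
  assumes g: "g \<in> clausius_duhem_cone P" and neg: "\<And>s. g s < 0"
  shows "clausius_duhem P (\<lambda>s. - 1 / g s)"
proof -
  obtain \<eta> where gc: "continuous_on UNIV g" and \<eta>: "continuous_on UNIV \<eta>"
    and ineq: "\<forall>p\<in>P. 0 \<le> sint (fst p) \<eta> + sint (snd p) g"
    using g unfolding clausius_duhem_cone_def by blast
  have "sint (snd p) (\<lambda>s. 1 / (- 1 / g s)) \<le> sint (fst p) \<eta>" if "p \<in> P" for p
    using ineq[rule_format, OF that] sint_scale[of "snd p" "-1" g] by simp
  moreover have "continuous_on UNIV (\<lambda>s. - 1 / g s)"
    using gc neg by (intro continuous_intros) (auto simp: less_imp_neq)
  ultimately show ?thesis
    unfolding clausius_duhem_def using \<eta> neg by (auto simp: divide_neg_neg)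
qed

lemma convex_cone_clausius_duhem_cone:
  fixes P :: "('a::t2_space) vp set"
  assumes cpt: "compact (UNIV::'a set)" and th: "thermo_theory P"
  shows "function_convex_cone (clausius_duhem_cone P)"
  unfolding function_convex_cone_def
proof (intro conjI ballI allI impI)
  show "(\<lambda>x. 0) \<in> clausius_duhem_cone P"
    unfolding clausius_duhem_cone_def by (intro CollectI conjI exI[of _ "\<lambda>x. 0"]) (auto simp: sint_def)
next
  fix w1 w2 assume "w1 \<in> clausius_duhem_cone P" "w2 \<in> clausius_duhem_cone P"
  then obtain \<eta>1 \<eta>2 where w: "continuous_on UNIV w1" "continuous_on UNIV w2"
    and \<eta>: "continuous_on UNIV \<eta>1" "continuous_on UNIV \<eta>2"
    and ineq: "\<forall>p\<in>P. 0 \<le> sint (fst p) \<eta>1 + sint (snd p) w1" "\<forall>p\<in>P. 0 \<le> sint (fst p) \<eta>2 + sint (snd p) w2"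
    unfolding clausius_duhem_cone_def by blast
  have "0 \<le> sint (fst p) (\<lambda>x. \<eta>1 x + \<eta>2 x) + sint (snd p) (\<lambda>x. w1 x + w2 x)" if "p \<in> P" for p
    using ineq that sint_add[OF cpt rsm_of_thermo_theory(1)[OF th that] \<eta>]
      sint_add[OF cpt rsm_of_thermo_theory(2)[OF th that] w] by fastforce
  then show "(\<lambda>x. w1 x + w2 x) \<in> clausius_duhem_cone P"
    unfolding clausius_duhem_cone_def using w \<eta>
    by (intro CollectI conjI exI[of _ "\<lambda>x. \<eta>1 x + \<eta>2 x"] continuous_intros ballI) auto
next
  fix w and c :: real assume "w \<in> clausius_duhem_cone P" "0 \<le> c"
  then obtain \<eta> where w: "continuous_on UNIV w" and \<eta>: "continuous_on UNIV \<eta>"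
    and ineq: "\<forall>p\<in>P. 0 \<le> sint (fst p) \<eta> + sint (snd p) w" and c: "c \<ge> 0"
    unfolding clausius_duhem_cone_def by blast
  have "0 \<le> sint (fst p) (\<lambda>x. c * \<eta> x) + sint (snd p) (\<lambda>x. c * w x)" if "p \<in> P" for p
    using ineq that c by (simp add: sint_scale flip: distrib_left)
  then show "(\<lambda>x. c * w x) \<in> clausius_duhem_cone P"
    unfolding clausius_duhem_cone_def using w \<eta>
    by (intro CollectI conjI exI[of _ "\<lambda>x. c * \<eta> x"] continuous_intros ballI) auto
qed

lemma in_hat_of_functional_nonpos_on_cone:
  fixes P :: "('a::t2_space) vp set"
  assumes cpt: "compact (UNIV::'a set)" and th: "thermo_theory P" and ne: "\<exists>x. in_hat P x"
    and L: "bounded_linear_functional L" and nonpos: "\<forall>w\<in>clausius_duhem_cone P. L w \<le> 0"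
  shows "\<exists>x. in_hat P x \<and> (\<forall>A\<in>sets borel. sval (fst x) A = 0) \<and>
           (\<forall>f. continuous_on UNIV f \<longrightarrow> sint (snd x) f = - L f)"
proof -
  obtain x0 where x0: "inV x0" "\<forall>A\<in>sets borel. sval (fst x0) A = 0"
    "\<forall>f. continuous_on UNIV f \<longrightarrow> sint (fst x0) f = 0 \<and> sint (snd x0) f = - L f"
    using signed_measure_of_bounded_functional[OF L] by blast
  have "in_hat P x0"
  proof (rule in_hat_of_inequalities[OF cpt th ne x0(1)])
    fix \<eta> g :: "'a \<Rightarrow> real"
    assume \<eta>: "continuous_on UNIV \<eta>" and g: "continuous_on UNIV g"
      and valid: "\<forall>p\<in>P. sint (fst p) \<eta> + sint (snd p) g \<le> 0"
    have "0 \<le> sint (fst p) (\<lambda>x. (-1) * \<eta> x) + sint (snd p) (\<lambda>x. (-1) * g x)" if "p \<in> P" for p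
      using valid that unfolding sint_scale by fastforce
    then have "(\<lambda>x. (-1) * g x) \<in> clausius_duhem_cone P"
      unfolding clausius_duhem_cone_def using \<eta> g
      by (intro CollectI conjI exI[of _ "\<lambda>x. (-1) * \<eta> x"] continuous_on_mult_left ballI)
    then have "0 \<le> L g" using nonpos bounded_linear_functional.scale[OF L g, of "-1"] by fastforce
    then show "sint (fst x0) \<eta> + sint (snd x0) g \<le> 0" using x0(3) \<eta> g by simp
  qed
  then show ?thesis using x0(2,3) by blast
qed

theorem clausius_duhem_cone_approx:
  fixes P :: "('a::t2_space) vp set"
  assumes cpt: "compact (UNIV::'a set)" and kp: "kelvin_planck P" and sc: "strong_clausius P T"
    and \<delta>: "\<delta> > 0"
  shows "\<exists>g\<in>clausius_duhem_cone P. \<forall>s. \<bar>g s + 1 / T s\<bar> \<le> \<delta>"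
proof (rule ccontr)
  assume far_cone: "\<not> ?thesis"
  have th: "thermo_theory P" and ne: "\<exists>x. in_hat P x" using kp unfolding kelvin_planck_def by blast+
  have Tc: "continuous_on UNIV T" and Tp: "\<forall>s. T s > 0"
    and SC: "\<forall>x. in_hat P x \<longrightarrow> (\<forall>A\<in>sets borel. sval (fst x) A = 0) \<longrightarrow> sint (snd x) (\<lambda>s. 1 / T s) \<le> 0"
    using sc unfolding strong_clausius_def by blast+
  define V where "V = {f::'a \<Rightarrow> real. continuous_on UNIV f}"
  have V: "function_subspace V" unfolding function_subspace_def V_def by (auto intro: continuous_intros)
  have V_bounded: "\<exists>B. \<forall>x. \<bar>v x\<bar> \<le> B" if "v \<in> V" for v
    using bounded_continuous_compact_UNIV[OF cpt] that unfolding V_def by blast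
  have inv_T: "continuous_on UNIV (\<lambda>s. 1 / T s)"
    using Tc Tp by (intro continuous_intros) (auto simp: less_imp_neq[symmetric])
  then have minus_inv_T: "(\<lambda>s. (-1) * (1 / T s)) \<in> V"
    unfolding V_def using continuous_on_mult_left by blast
  have far: "\<exists>s. \<delta> < \<bar>(-1) * (1 / T s) - w s\<bar>" if w: "w \<in> clausius_duhem_cone P" for w
  proof (rule ccontr)
    assume "\<not> ?thesis"
    then have "\<bar>w s + 1 / T s\<bar> \<le> \<delta>" for s
      by (metis abs_minus_commute add.commute diff_minus_eq_add mult_minus1 not_less)
    then show False using far_cone w by blast
  qed
  have "clausius_duhem_cone P \<subseteq> V" unfolding clausius_duhem_cone_def V_def by blast
  from separation_from_convex_cone[OF V V_bounded convex_cone_clausius_duhem_cone[OF cpt th]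
      this minus_inv_T far]
  obtain L where L: "linear_on V L" "\<forall>w\<in>clausius_duhem_cone P. L w \<le> 0"
      "\<delta> \<le> L (\<lambda>s. (-1) * (1 / T s))" "\<forall>v\<in>V. \<forall>B. (\<forall>x. \<bar>v x\<bar> \<le> B) \<longrightarrow> L v \<le> B"
    by blast
  have "bounded_linear_functional L"
    using L(1,4) cpt unfolding bounded_linear_functional_def linear_on_def V_def by blast
  from in_hat_of_functional_nonpos_on_cone[OF cpt th ne this L(2)]
  obtain x where x: "in_hat P x" "\<forall>A\<in>sets borel. sval (fst x) A = 0"
    "\<forall>f. continuous_on UNIV f \<longrightarrow> sint (snd x) f = - L f"
    by blast
  then have "sint (snd x) (\<lambda>s. 1 / T s) \<le> 0" using SC by blast
  then have "0 \<le> L (\<lambda>s. 1 / T s)" using x(3) inv_T by simp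
  then show False
    using L(3) linear_onD(2)[OF L(1), of "\<lambda>s. 1 / T s" "-1"] inv_T \<delta> unfolding V_def by simp
qed

lemma reciprocal_approx:
  fixes T g :: "'a \<Rightarrow> real"
  assumes T: "\<forall>s. 0 < T s" "\<forall>s. T s \<le> M" and \<epsilon>: "\<epsilon> > 0"
    and g: "\<forall>s. \<bar>g s + 1 / T s\<bar> \<le> min (1 / (2 * M)) (\<epsilon> / (4 * M\<^sup>2))"
  shows "g s < 0" "\<bar>- 1 / g s - T s\<bar> < \<epsilon>"
proof -
  have M: "M > 0" using T[rule_format, of s] by linarith
  define u where "u = - g s"
  define v where "v = 1 / T s"
  have v: "v \<ge> 1 / M" unfolding v_def using T[rule_format, of s] by (simp add: frac_le)
  have uv: "\<bar>v - u\<bar> \<le> 1 / (2 * M)" "\<bar>v - u\<bar> \<le> \<epsilon> / (4 * M\<^sup>2)"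
    using g[rule_format, of s] unfolding u_def v_def by (simp_all add: add.commute)
  have u: "u \<ge> 1 / (2 * M)" using v uv(1) M by (simp add: field_simps abs_le_iff)
  then have u0: "u > 0" using M by (smt (verit) divide_pos_pos)
  then show "g s < 0" unfolding u_def by simp
  have v0: "v > 0" using v M by (smt (verit) divide_pos_pos)
  have "\<bar>- 1 / g s - T s\<bar> = \<bar>v - u\<bar> / (u * v)"
    unfolding u_def v_def using u0 v0 T[rule_format, of s] unfolding u_def v_def
    by (simp add: field_simps abs_div abs_mult)
  also have "\<dots> \<le> (\<epsilon> / (4 * M\<^sup>2)) / ((1 / (2 * M)) * (1 / M))"
    using uv(2) u v u0 v0 M by (intro frac_le mult_mono) auto
  also have "\<dots> = \<epsilon> / 2" using M by (simp add: field_simps power2_eq_square)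
  also have "\<dots> < \<epsilon>" using \<epsilon> by simp
  finally show "\<bar>- 1 / g s - T s\<bar> < \<epsilon>" .
qed

theorem theoremD1:
  fixes P :: "('a::t2_space) vp set"
  assumes "compact (UNIV :: 'a set)"
    and "kelvin_planck P"
    and "strong_clausius P T"
    and "\<epsilon> > 0"
  shows "\<exists>T'. clausius_duhem P T' \<and> (\<forall>s. \<bar>T' s - T s\<bar> < \<epsilon>)"
proof -
  have Tc: "continuous_on UNIV T" and Tp: "\<forall>s. 0 < T s"
    using assms(3) unfolding strong_clausius_def by blast+
  from bounded_continuous_compact_UNIV[OF assms(1) Tc] obtain M where "\<forall>s. \<bar>T s\<bar> \<le> M" ..
  then have TM: "\<forall>s. T s \<le> M" by (meson abs_ge_self order_trans)
  then have "M > 0" using Tp by (meson less_le_trans)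
  then obtain g where g: "g \<in> clausius_duhem_cone P"
      "\<forall>s. \<bar>g s + 1 / T s\<bar> \<le> min (1 / (2 * M)) (\<epsilon> / (4 * M\<^sup>2))"
    using clausius_duhem_cone_approx[OF assms(1-3), of "min (1 / (2 * M)) (\<epsilon> / (4 * M\<^sup>2))"] assms(4)
    by auto
  have "clausius_duhem P (\<lambda>s. - 1 / g s)"
    using clausius_duhem_of_cone[OF g(1)] reciprocal_approx(1)[OF Tp TM assms(4) g(2)] by blast
  then show ?thesis using reciprocal_approx(2)[OF Tp TM assms(4) g(2)] by blast
qed

end
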